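(* In a generalised differential Seely category, the family $\mathscr D^X_A:W(X,A)\to\,!^SW(X,A)$, for $X\in\mathscr C$, $A\in\mathcal L$, is a natural transformation $W\Rightarrow\,!^S W$: for every morphism $(f,u):(X,A)\to(Y,B)$ of $LS(\mathscr C)$, $\mathscr D^X_A;!^S(W(f,u))=W(f,u);\mathscr D^Y_B$.
   Context: Composition is diagrammatic; monoidal categories are strict. Setting: an LNL adjunction $\mathcal F\dashv\mathcal U$, $\mathcal F:\mathscr C\to\mathcal L$, between cartesian $(\mathscr C,\times,I)$ and symmetric monoidal $(\mathcal L,\otimes,1)$; $\mathcal U$ lax monoidal via $n_{A,B}:\mathcal U(A)\times\mathcal U(B)\to\mathcal U(A\otimes B)$; $\mathcal F$ strong monoidal via isomorphisms $m_{X,Y}:\mathcal F(X)\otimes\mathcal F(Y)\to\mathcal F(X\times Y)$, $m_1$; unit $\eta$; comonad $!=\mathcal F\mathcal U$; $\mathbf c_X:=\mathcal F(\Delta_X);m_{X,X}^{-1}$, $\mathbf w_X:=\mathcal F(t_X);m_1^{-1}$. $LS(\mathscr C)$: objects $(X,A)$; morphisms $(f,u):(X,A)\to(Y,B)$ with $f:X\to Y$, $u:\mathcal F(X)\otimes A\to B$; composition $(f,u);(g,v)=(f;g,(\mathbf c_X\otimes\mathrm{id}_A);(\mathcal F(f)\otimes u);v)$; identity $(\mathrm{id}_X,\mathbf w_X\otimes\mathrm{id}_A)$; $\mathbf{ls}(f,u)=f$; vertical morphisms over $X$ are $(\mathrm{id}_X,u)$. With biproducts $\oplus$ in $\mathcal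 L$: fibrewise injections $\iota^X_i=(\mathrm{id}_X,\mathbf w_X\otimes\iota_i)$; products in $LS(\mathscr C)$: $(X\times Y,A\oplus B)$, projections $(\pi_i,\mathbf w_{X\times Y}\otimes\pi_i)$. The functor $!^S:LS(\mathscr C)\to LS(\mathscr C)$: $!^S(X,A)=(X,!A)$, $!^S(f,u)=(f,(\mathcal F(\eta_X)\otimes\mathrm{id}_{!A});m_{\mathcal U\mathcal F(X),\mathcal U(A)};\mathcal F(n_{\mathcal F(X),A});!u)$. GDSC: $\mathcal L$ additive (CMon-enriched, $\otimes$ bilinear) with finite products, and a functor $\mathcal T:\mathscr C\to LS(\mathscr C)$ with: (t.1) $\mathbf{ls}\circ\mathcal T=\mathrm{id}$, so $\mathcal T(X)=(X,\lambda(X))$, and $\varphi_{X,Y}:=\langle\mathcal T(\pi_1),\mathcal T(\pi_2)\rangle:\mathcal T(X\times Y)\to(X\times Y,\lambda(X)\oplus\lambda(Y))$ is an isomorphism; (t.2) $\mathcal T(\mathcal U(A))=(\mathcal U(A),A)$; (t.3) with $i^{X,Y}_2:=\iota^{X\times Y}_2;\varphi^{-1}_{X,Y}$, comprehension $⦃(f,u)⦄:=\langle\pi_1;f,(\eta_X\times\mathrm{id}_{\mathcal U(A)});n_{\mathcal F(X),A};\mathcal U(u)\rangle:X\times\mathcal U(A)\to Y\times\mathcal U(B)$, weakening functor $W(X,A):=(X\times\mathcal U(A),A)$, $W(f,u):=(⦃(f,u)⦄,(\mathcal F(\pi_1)\otimes\mathrm{id}_A);u)$: $W(f,u);i^{Y,\mathcal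 U(B)}_2=i^{X,\mathcal U(A)}_2;\mathcal T(⦃(f,u)⦄)$. Differential: for $h:X\to Y$ with $\mathcal T(h)=(h,v)$, $\mathrm D(h):=(\mathrm{id}_X,v)$; for $h:X\times Y\to Z$, $\mathrm D_2(h):=i^{X,Y}_2;\mathrm D(h)$. Define $\mathscr D^X_A:=\mathrm D_2(\pi_2;\eta_{\mathcal U(A)}):(X\times\mathcal U(A),A)\to(X\times\mathcal U(A),!A)$, where $\pi_2;\eta_{\mathcal U(A)}:X\times\mathcal U(A)\to\mathcal U(!A)$. *)

theory Defs
  imports Main
begin

text \<open>
  Composition is diagrammatic throughout: comp f g means "first f, then g".
  Types: 'co = objects of C, 'ca = arrows of C, 'lo = objects of L, 'la = arrows of L.
\<close>

record ('co, 'ca, 'lo, 'la) lnl_data =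
  cDom   :: "'ca \<Rightarrow> 'co"
  cCod   :: "'ca \<Rightarrow> 'co"
  cComp  :: "'ca \<Rightarrow> 'ca \<Rightarrow> 'ca"
  cId    :: "'co \<Rightarrow> 'ca"
  cProd  :: "'co \<Rightarrow> 'co \<Rightarrow> 'co"
  cPi1   :: "'co \<Rightarrow> 'co \<Rightarrow> 'ca"
  cPi2   :: "'co \<Rightarrow> 'co \<Rightarrow> 'ca"
  cPair  :: "'ca \<Rightarrow> 'ca \<Rightarrow> 'ca"
  cTerm  :: "'co"
  cBang  :: "'co \<Rightarrow> 'ca"
  lDom   :: "'la \<Rightarrow> 'lo"
  lCod   :: "'la \<Rightarrow> 'lo"
  lComp  :: "'la \<Rightarrow> 'la \<Rightarrow> 'la"
  lId    :: "'lo \<Rightarrow> 'la"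
  lTen   :: "'lo \<Rightarrow> 'lo \<Rightarrow> 'lo"
  lTenM  :: "'la \<Rightarrow> 'la \<Rightarrow> 'la"
  lUnit  :: "'lo"
  lSym   :: "'lo \<Rightarrow> 'lo \<Rightarrow> 'la"
  lZero  :: "'lo \<Rightarrow> 'lo \<Rightarrow> 'la"
  lAdd   :: "'la \<Rightarrow> 'la \<Rightarrow> 'la"
  lProd  :: "'lo \<Rightarrow> 'lo \<Rightarrow> 'lo"
  lPi1   :: "'lo \<Rightarrow> 'lo \<Rightarrow> 'la"
  lPi2   :: "'lo \<Rightarrow> 'lo \<Rightarrow> 'la"
  lPair  :: "'la \<Rightarrow> 'la \<Rightarrow> 'la"
  lTerm  :: "'lo"
  lBang  :: "'lo \<Rightarrow> 'la"
  FO     :: "'co \<Rightarrow> 'lo"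
  FM     :: "'ca \<Rightarrow> 'la"
  UO     :: "'lo \<Rightarrow> 'co"
  UM     :: "'la \<Rightarrow> 'ca"
  adjEta :: "'co \<Rightarrow> 'ca"
  adjEps :: "'lo \<Rightarrow> 'la"
  monN   :: "'lo \<Rightarrow> 'lo \<Rightarrow> 'ca"
  monN1  :: "'ca"
  monM   :: "'co \<Rightarrow> 'co \<Rightarrow> 'la"
  monMinv :: "'co \<Rightarrow> 'co \<Rightarrow> 'la"
  monM1  :: "'la"
  monM1inv :: "'la"
  (* the functor T : C -> LS(C); T(X) = (X, tLam X), T(h) = (h, tMor h) *)
  tLam   :: "'co \<Rightarrow> 'lo"
  tMor   :: "'ca \<Rightarrow> 'la"

definition chom :: "('co,'ca,'lo,'la) lnl_data \<Rightarrow> 'ca \<Rightarrow> 'co \<Rightarrow> 'co \<Rightarrow> bool" where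
  "chom S f X Y \<longleftrightarrow> cDom S f = X \<and> cCod S f = Y"

definition lhom :: "('co,'ca,'lo,'la) lnl_data \<Rightarrow> 'la \<Rightarrow> 'lo \<Rightarrow> 'lo \<Rightarrow> bool" where
  "lhom S f A B \<longleftrightarrow> lDom S f = A \<and> lCod S f = B"

definition cProdM :: "('co,'ca,'lo,'la) lnl_data \<Rightarrow> 'ca \<Rightarrow> 'ca \<Rightarrow> 'ca" where
  "cProdM S f g = cPair S (cComp S (cPi1 S (cDom S f) (cDom S g)) f)
                          (cComp S (cPi2 S (cDom S f) (cDom S g)) g)"

definition cDiag :: "('co,'ca,'lo,'la) lnl_data \<Rightarrow> 'co \<Rightarrow> 'ca" where
  "cDiag S X = cPair S (cId S X) (cId S X)"

definition cSwap :: "('co,'ca,'lo,'la) lnl_data \<Rightarrow> 'co \<Rightarrow> 'co \<Rightarrow> 'ca" where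
  "cSwap S X Y = cPair S (cPi2 S X Y) (cPi1 S X Y)"

definition lInj2 :: "('co,'ca,'lo,'la) lnl_data \<Rightarrow> 'lo \<Rightarrow> 'lo \<Rightarrow> 'la" where
  "lInj2 S A B = lPair S (lZero S B A) (lId S B)"

definition contr :: "('co,'ca,'lo,'la) lnl_data \<Rightarrow> 'co \<Rightarrow> 'la" where
  "contr S X = lComp S (FM S (cDiag S X)) (monMinv S X X)"

definition weak :: "('co,'ca,'lo,'la) lnl_data \<Rightarrow> 'co \<Rightarrow> 'la" where
  "weak S X = lComp S (FM S (cBang S X)) (monM1inv S)"

subsection \<open>The category LS(C)\<close>

text \<open>Objects are pairs (X,A); morphisms are pairs (f,u).  Since u does not determine A,
  composition and the identity take the relevant object explicitly.\<close>

definition lshom :: "('co,'ca,'lo,'la) lnl_data \<Rightarrow> 'ca \<times> 'la \<Rightarrow> 'co \<times> 'lo \<Rightarrow> 'co \<times> 'lo \<Rightarrow> bool" where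
  "lshom S fu XA YB \<longleftrightarrow> chom S (fst fu) (fst XA) (fst YB)
      \<and> lhom S (snd fu) (lTen S (FO S (fst XA)) (snd XA)) (snd YB)"

definition lsComp :: "('co,'ca,'lo,'la) lnl_data \<Rightarrow> 'lo \<Rightarrow> 'ca \<times> 'la \<Rightarrow> 'ca \<times> 'la \<Rightarrow> 'ca \<times> 'la" where
  "lsComp S A fu gv =
     (cComp S (fst fu) (fst gv),
      lComp S (lComp S (lTenM S (contr S (cDom S (fst fu))) (lId S A))
                       (lTenM S (FM S (fst fu)) (snd fu)))
              (snd gv))"

definition lsId :: "('co,'ca,'lo,'la) lnl_data \<Rightarrow> 'co \<times> 'lo \<Rightarrow> 'ca \<times> 'la" where
  "lsId S XA = (cId S (fst XA), lTenM S (weak S (fst XA)) (lId S (snd XA)))"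

definition lsIso :: "('co,'ca,'lo,'la) lnl_data \<Rightarrow> 'ca \<times> 'la \<Rightarrow> 'co \<times> 'lo \<Rightarrow> 'co \<times> 'lo \<Rightarrow> bool" where
  "lsIso S fu XA YB \<longleftrightarrow> lshom S fu XA YB \<and>
     (\<exists>gv. lshom S gv YB XA \<and> lsComp S (snd XA) fu gv = lsId S XA
                             \<and> lsComp S (snd YB) gv fu = lsId S YB)"

definition lsPair :: "('co,'ca,'lo,'la) lnl_data \<Rightarrow> 'ca \<times> 'la \<Rightarrow> 'ca \<times> 'la \<Rightarrow> 'ca \<times> 'la" where
  "lsPair S fu gv = (cPair S (fst fu) (fst gv), lPair S (snd fu) (snd gv))"

definition lsInj2 :: "('co,'ca,'lo,'la) lnl_data \<Rightarrow> 'co \<Rightarrow> 'lo \<Rightarrow> 'lo \<Rightarrow> 'ca \<times> 'la" where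
  "lsInj2 S X A B = (cId S X, lTenM S (weak S X) (lInj2 S A B))"

definition bangS :: "('co,'ca,'lo,'la) lnl_data \<Rightarrow> 'co \<times> 'lo \<Rightarrow> 'ca \<times> 'la \<Rightarrow> 'ca \<times> 'la" where
  "bangS S XA fu =
     (fst fu,
      lComp S (lComp S (lComp S
        (lTenM S (FM S (adjEta S (fst XA))) (lId S (FO S (UO S (snd XA)))))
        (monM S (UO S (FO S (fst XA))) (UO S (snd XA))))
        (FM S (monN S (FO S (fst XA)) (snd XA))))
        (FM S (UM S (snd fu))))"

definition tFun :: "('co,'ca,'lo,'la) lnl_data \<Rightarrow> 'ca \<Rightarrow> 'ca \<times> 'la" where
  "tFun S h = (h, tMor S h)"

definition phiT :: "('co,'ca,'lo,'la) lnl_data \<Rightarrow> 'co \<Rightarrow> 'co \<Rightarrow> 'ca \<times> 'la" where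
  "phiT S X Y = lsPair S (tFun S (cPi1 S X Y)) (tFun S (cPi2 S X Y))"

(* its inverse in LS(C) (unique when it exists, by (t.1)) *)
definition phiInv :: "('co,'ca,'lo,'la) lnl_data \<Rightarrow> 'co \<Rightarrow> 'co \<Rightarrow> 'ca \<times> 'la" where
  "phiInv S X Y = (SOME gv.
      lshom S gv (cProd S X Y, lProd S (tLam S X) (tLam S Y)) (cProd S X Y, tLam S (cProd S X Y))
    \<and> lsComp S (tLam S (cProd S X Y)) (phiT S X Y) gv = lsId S (cProd S X Y, tLam S (cProd S X Y))
    \<and> lsComp S (lProd S (tLam S X) (tLam S Y)) gv (phiT S X Y)
         = lsId S (cProd S X Y, lProd S (tLam S X) (tLam S Y)))"

definition iT2 :: "('co,'ca,'lo,'la) lnl_data \<Rightarrow> 'co \<Rightarrow> 'co \<Rightarrow> 'ca \<times> 'la" where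
  "iT2 S X Y = lsComp S (tLam S Y) (lsInj2 S (cProd S X Y) (tLam S X) (tLam S Y)) (phiInv S X Y)"

definition compr :: "('co,'ca,'lo,'la) lnl_data \<Rightarrow> 'co \<times> 'lo \<Rightarrow> 'ca \<times> 'la \<Rightarrow> 'ca" where
  "compr S XA fu =
     cPair S (cComp S (cPi1 S (fst XA) (UO S (snd XA))) (fst fu))
             (cComp S (cComp S (cProdM S (adjEta S (fst XA)) (cId S (UO S (snd XA))))
                               (monN S (FO S (fst XA)) (snd XA)))
                      (UM S (snd fu)))"

definition WObj :: "('co,'ca,'lo,'la) lnl_data \<Rightarrow> 'co \<times> 'lo \<Rightarrow> 'co \<times> 'lo" where
  "WObj S XA = (cProd S (fst XA) (UO S (snd XA)), snd XA)"

definition WMor :: "('co,'ca,'lo,'la) lnl_data \<Rightarrow> 'co \<times> 'lo \<Rightarrow> 'ca \<times> 'la \<Rightarrow> 'ca \<times> 'la" where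
  "WMor S XA fu =
     (compr S XA fu,
      lComp S (lTenM S (FM S (cPi1 S (fst XA) (UO S (snd XA)))) (lId S (snd XA))) (snd fu))"

definition diffD :: "('co,'ca,'lo,'la) lnl_data \<Rightarrow> 'ca \<Rightarrow> 'ca \<times> 'la" where
  "diffD S h = (cId S (cDom S h), tMor S h)"

definition diffD2 :: "('co,'ca,'lo,'la) lnl_data \<Rightarrow> 'co \<Rightarrow> 'co \<Rightarrow> 'ca \<Rightarrow> 'ca \<times> 'la" where
  "diffD2 S X Y h = lsComp S (tLam S Y) (iT2 S X Y) (diffD S h)"

definition scrD :: "('co,'ca,'lo,'la) lnl_data \<Rightarrow> 'co \<Rightarrow> 'lo \<Rightarrow> 'ca \<times> 'la" where
  "scrD S X A = diffD2 S X (UO S A)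
                  (cComp S (cPi2 S X (UO S A)) (adjEta S (UO S A)))"


definition C_category :: "('co,'ca,'lo,'la) lnl_data \<Rightarrow> bool" where
  "C_category S \<longleftrightarrow>
     (\<forall>X. chom S (cId S X) X X)
   \<and> (\<forall>f g X Y Z. chom S f X Y \<longrightarrow> chom S g Y Z \<longrightarrow> chom S (cComp S f g) X Z)
   \<and> (\<forall>f X Y. chom S f X Y \<longrightarrow> cComp S (cId S X) f = f \<and> cComp S f (cId S Y) = f)
   \<and> (\<forall>f g h W X Y Z. chom S f W X \<longrightarrow> chom S g X Y \<longrightarrow> chom S h Y Z \<longrightarrow>
        cComp S (cComp S f g) h = cComp S f (cComp S g h))"

definition C_cartesian :: "('co,'ca,'lo,'la) lnl_data \<Rightarrow> bool" where
  "C_cartesian S \<longleftrightarrow>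
     (\<forall>X Y. chom S (cPi1 S X Y) (cProd S X Y) X \<and> chom S (cPi2 S X Y) (cProd S X Y) Y)
   \<and> (\<forall>f g Z X Y. chom S f Z X \<longrightarrow> chom S g Z Y \<longrightarrow>
        chom S (cPair S f g) Z (cProd S X Y)
        \<and> cComp S (cPair S f g) (cPi1 S X Y) = f \<and> cComp S (cPair S f g) (cPi2 S X Y) = g)
   \<and> (\<forall>h Z X Y. chom S h Z (cProd S X Y) \<longrightarrow>
        h = cPair S (cComp S h (cPi1 S X Y)) (cComp S h (cPi2 S X Y)))
   \<and> (\<forall>X. chom S (cBang S X) X (cTerm S))
   \<and> (\<forall>h X. chom S h X (cTerm S) \<longrightarrow> h = cBang S X)"

definition C_strict :: "('co,'ca,'lo,'la) lnl_data \<Rightarrow> bool" where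
  "C_strict S \<longleftrightarrow>
     (\<forall>X Y Z. cProd S (cProd S X Y) Z = cProd S X (cProd S Y Z)
        \<and> cPi1 S (cProd S X Y) Z = cPair S (cPi1 S X (cProd S Y Z))
                                         (cComp S (cPi2 S X (cProd S Y Z)) (cPi1 S Y Z))
        \<and> cPi2 S (cProd S X Y) Z = cComp S (cPi2 S X (cProd S Y Z)) (cPi2 S Y Z))
   \<and> (\<forall>X. cProd S (cTerm S) X = X \<and> cPi2 S (cTerm S) X = cId S X)
   \<and> (\<forall>X. cProd S X (cTerm S) = X \<and> cPi1 S X (cTerm S) = cId S X)"

definition L_category :: "('co,'ca,'lo,'la) lnl_data \<Rightarrow> bool" where
  "L_category S \<longleftrightarrow>
     (\<forall>A. lhom S (lId S A) A A)
   \<and> (\<forall>f g A B C. lhom S f A B \<longrightarrow> lhom S g B C \<longrightarrow> lhom S (lComp S f g) A C)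
   \<and> (\<forall>f A B. lhom S f A B \<longrightarrow> lComp S (lId S A) f = f \<and> lComp S f (lId S B) = f)
   \<and> (\<forall>f g h A B C D. lhom S f A B \<longrightarrow> lhom S g B C \<longrightarrow> lhom S h C D \<longrightarrow>
        lComp S (lComp S f g) h = lComp S f (lComp S g h))"

definition L_symmetric_strict_monoidal :: "('co,'ca,'lo,'la) lnl_data \<Rightarrow> bool" where
  "L_symmetric_strict_monoidal S \<longleftrightarrow>
     (\<forall>f g A B C D. lhom S f A B \<longrightarrow> lhom S g C D \<longrightarrow> lhom S (lTenM S f g) (lTen S A C) (lTen S B D))
   \<and> (\<forall>A B. lTenM S (lId S A) (lId S B) = lId S (lTen S A B))
   \<and> (\<forall>f f' g g' A B C A' B' C'. lhom S f A B \<longrightarrow> lhom S f' B C \<longrightarrow> lhom S g A' B' \<longrightarrow> lhom S g' B' C' \<longrightarrow>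
        lTenM S (lComp S f f') (lComp S g g') = lComp S (lTenM S f g) (lTenM S f' g'))
   \<and> (\<forall>A B C. lTen S (lTen S A B) C = lTen S A (lTen S B C))
   \<and> (\<forall>A. lTen S (lUnit S) A = A \<and> lTen S A (lUnit S) = A)
   \<and> (\<forall>f g h. lTenM S (lTenM S f g) h = lTenM S f (lTenM S g h))
   \<and> (\<forall>f. lTenM S (lId S (lUnit S)) f = f \<and> lTenM S f (lId S (lUnit S)) = f)
   \<and> (\<forall>A B. lhom S (lSym S A B) (lTen S A B) (lTen S B A))
   \<and> (\<forall>f g A B C D. lhom S f A B \<longrightarrow> lhom S g C D \<longrightarrow>
        lComp S (lTenM S f g) (lSym S B D) = lComp S (lSym S A C) (lTenM S g f))
   \<and> (\<forall>A B. lComp S (lSym S A B) (lSym S B A) = lId S (lTen S A B))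
   \<and> (\<forall>A B C. lSym S A (lTen S B C) = lComp S (lTenM S (lSym S A B) (lId S C)) (lTenM S (lId S B) (lSym S A C)))"

definition L_additive :: "('co,'ca,'lo,'la) lnl_data \<Rightarrow> bool" where
  "L_additive S \<longleftrightarrow>
     (\<forall>A B. lhom S (lZero S A B) A B)
   \<and> (\<forall>f g A B. lhom S f A B \<longrightarrow> lhom S g A B \<longrightarrow> lhom S (lAdd S f g) A B)
   \<and> (\<forall>f g h A B. lhom S f A B \<longrightarrow> lhom S g A B \<longrightarrow> lhom S h A B \<longrightarrow>
        lAdd S (lAdd S f g) h = lAdd S f (lAdd S g h))
   \<and> (\<forall>f g A B. lhom S f A B \<longrightarrow> lhom S g A B \<longrightarrow> lAdd S f g = lAdd S g f)
   \<and> (\<forall>f A B. lhom S f A B \<longrightarrow> lAdd S f (lZero S A B) = f)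
   \<and> (\<forall>f g h A B C. lhom S f A B \<longrightarrow> lhom S g B C \<longrightarrow> lhom S h B C \<longrightarrow>
        lComp S f (lAdd S g h) = lAdd S (lComp S f g) (lComp S f h))
   \<and> (\<forall>f g h A B C. lhom S f A B \<longrightarrow> lhom S g A B \<longrightarrow> lhom S h B C \<longrightarrow>
        lComp S (lAdd S f g) h = lAdd S (lComp S f h) (lComp S g h))
   \<and> (\<forall>f A B C. lhom S f A B \<longrightarrow> lComp S f (lZero S B C) = lZero S A C)
   \<and> (\<forall>f A B C. lhom S f B C \<longrightarrow> lComp S (lZero S A B) f = lZero S A C)
   \<and> (\<forall>f g h A B C D. lhom S f A B \<longrightarrow> lhom S g A B \<longrightarrow> lhom S h C D \<longrightarrow>
        lTenM S (lAdd S f g) h = lAdd S (lTenM S f h) (lTenM S g h)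
        \<and> lTenM S h (lAdd S f g) = lAdd S (lTenM S h f) (lTenM S h g))
   \<and> (\<forall>h A B C D. lhom S h C D \<longrightarrow>
        lTenM S (lZero S A B) h = lZero S (lTen S A C) (lTen S B D)
        \<and> lTenM S h (lZero S A B) = lZero S (lTen S C A) (lTen S D B))"

definition L_products :: "('co,'ca,'lo,'la) lnl_data \<Rightarrow> bool" where
  "L_products S \<longleftrightarrow>
     (\<forall>A B. lhom S (lPi1 S A B) (lProd S A B) A \<and> lhom S (lPi2 S A B) (lProd S A B) B)
   \<and> (\<forall>f g C A B. lhom S f C A \<longrightarrow> lhom S g C B \<longrightarrow>
        lhom S (lPair S f g) C (lProd S A B)
        \<and> lComp S (lPair S f g) (lPi1 S A B) = f \<and> lComp S (lPair S f g) (lPi2 S A B) = g)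
   \<and> (\<forall>h C A B. lhom S h C (lProd S A B) \<longrightarrow>
        h = lPair S (lComp S h (lPi1 S A B)) (lComp S h (lPi2 S A B)))
   \<and> (\<forall>A. lhom S (lBang S A) A (lTerm S))
   \<and> (\<forall>h A. lhom S h A (lTerm S) \<longrightarrow> h = lBang S A)"

definition functors :: "('co,'ca,'lo,'la) lnl_data \<Rightarrow> bool" where
  "functors S \<longleftrightarrow>
     (\<forall>f X Y. chom S f X Y \<longrightarrow> lhom S (FM S f) (FO S X) (FO S Y))
   \<and> (\<forall>X. FM S (cId S X) = lId S (FO S X))
   \<and> (\<forall>f g X Y Z. chom S f X Y \<longrightarrow> chom S g Y Z \<longrightarrow> FM S (cComp S f g) = lComp S (FM S f) (FM S g))
   \<and> (\<forall>f A B. lhom S f A B \<longrightarrow> chom S (UM S f) (UO S A) (UO S B))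
   \<and> (\<forall>A. UM S (lId S A) = cId S (UO S A))
   \<and> (\<forall>f g A B C. lhom S f A B \<longrightarrow> lhom S g B C \<longrightarrow> UM S (lComp S f g) = cComp S (UM S f) (UM S g))"

definition adjunction :: "('co,'ca,'lo,'la) lnl_data \<Rightarrow> bool" where
  "adjunction S \<longleftrightarrow>
     (\<forall>X. chom S (adjEta S X) X (UO S (FO S X)))
   \<and> (\<forall>A. lhom S (adjEps S A) (FO S (UO S A)) A)
   \<and> (\<forall>f X Y. chom S f X Y \<longrightarrow> cComp S f (adjEta S Y) = cComp S (adjEta S X) (UM S (FM S f)))
   \<and> (\<forall>g A B. lhom S g A B \<longrightarrow> lComp S (FM S (UM S g)) (adjEps S B) = lComp S (adjEps S A) g)
   \<and> (\<forall>X. lComp S (FM S (adjEta S X)) (adjEps S (FO S X)) = lId S (FO S X))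
   \<and> (\<forall>A. cComp S (adjEta S (UO S A)) (UM S (adjEps S A)) = cId S (UO S A))"

definition U_lax_monoidal :: "('co,'ca,'lo,'la) lnl_data \<Rightarrow> bool" where
  "U_lax_monoidal S \<longleftrightarrow>
     (\<forall>A B. chom S (monN S A B) (cProd S (UO S A) (UO S B)) (UO S (lTen S A B)))
   \<and> chom S (monN1 S) (cTerm S) (UO S (lUnit S))
   \<and> (\<forall>f g A A' B B'. lhom S f A A' \<longrightarrow> lhom S g B B' \<longrightarrow>
        cComp S (cProdM S (UM S f) (UM S g)) (monN S A' B') = cComp S (monN S A B) (UM S (lTenM S f g)))
   \<and> (\<forall>A B C. cComp S (cProdM S (monN S A B) (cId S (UO S C))) (monN S (lTen S A B) C)
              = cComp S (cProdM S (cId S (UO S A)) (monN S B C)) (monN S A (lTen S B C)))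
   \<and> (\<forall>A. cComp S (cProdM S (monN1 S) (cId S (UO S A))) (monN S (lUnit S) A) = cId S (UO S A))
   \<and> (\<forall>A. cComp S (cProdM S (cId S (UO S A)) (monN1 S)) (monN S A (lUnit S)) = cId S (UO S A))
   \<and> (\<forall>A B. cComp S (cSwap S (UO S A) (UO S B)) (monN S B A) = cComp S (monN S A B) (UM S (lSym S A B)))"

definition F_strong_monoidal :: "('co,'ca,'lo,'la) lnl_data \<Rightarrow> bool" where
  "F_strong_monoidal S \<longleftrightarrow>
     (\<forall>X Y. lhom S (monM S X Y) (lTen S (FO S X) (FO S Y)) (FO S (cProd S X Y))
          \<and> lhom S (monMinv S X Y) (FO S (cProd S X Y)) (lTen S (FO S X) (FO S Y))
          \<and> lComp S (monM S X Y) (monMinv S X Y) = lId S (lTen S (FO S X) (FO S Y))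
          \<and> lComp S (monMinv S X Y) (monM S X Y) = lId S (FO S (cProd S X Y)))
   \<and> lhom S (monM1 S) (lUnit S) (FO S (cTerm S))
   \<and> lhom S (monM1inv S) (FO S (cTerm S)) (lUnit S)
   \<and> lComp S (monM1 S) (monM1inv S) = lId S (lUnit S)
   \<and> lComp S (monM1inv S) (monM1 S) = lId S (FO S (cTerm S))
   \<and> (\<forall>f g X X' Y Y'. chom S f X X' \<longrightarrow> chom S g Y Y' \<longrightarrow>
        lComp S (lTenM S (FM S f) (FM S g)) (monM S X' Y') = lComp S (monM S X Y) (FM S (cProdM S f g)))
   \<and> (\<forall>X Y Z. lComp S (lTenM S (monM S X Y) (lId S (FO S Z))) (monM S (cProd S X Y) Z)
              = lComp S (lTenM S (lId S (FO S X)) (monM S Y Z)) (monM S X (cProd S Y Z)))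
   \<and> (\<forall>X. lComp S (lTenM S (monM1 S) (lId S (FO S X))) (monM S (cTerm S) X) = lId S (FO S X))
   \<and> (\<forall>X. lComp S (lTenM S (lId S (FO S X)) (monM1 S)) (monM S X (cTerm S)) = lId S (FO S X))
   \<and> (\<forall>X Y. lComp S (lSym S (FO S X) (FO S Y)) (monM S Y X) = lComp S (monM S X Y) (FM S (cSwap S X Y)))"

definition monoidal_adjunction :: "('co,'ca,'lo,'la) lnl_data \<Rightarrow> bool" where
  "monoidal_adjunction S \<longleftrightarrow>
     (\<forall>X Y. cComp S (cComp S (cProdM S (adjEta S X) (adjEta S Y)) (monN S (FO S X) (FO S Y)))
                    (UM S (monM S X Y)) = adjEta S (cProd S X Y))
   \<and> cComp S (monN1 S) (UM S (monM1 S)) = adjEta S (cTerm S)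
   \<and> (\<forall>A B. lComp S (lComp S (monM S (UO S A) (UO S B)) (FM S (monN S A B))) (adjEps S (lTen S A B))
              = lTenM S (adjEps S A) (adjEps S B))
   \<and> lComp S (lComp S (monM1 S) (FM S (monN1 S))) (adjEps S (lUnit S)) = lId S (lUnit S)"

definition LNL :: "('co,'ca,'lo,'la) lnl_data \<Rightarrow> bool" where
  "LNL S \<longleftrightarrow> C_category S \<and> C_cartesian S \<and> C_strict S
     \<and> L_category S \<and> L_symmetric_strict_monoidal S
     \<and> functors S \<and> adjunction S \<and> U_lax_monoidal S \<and> F_strong_monoidal S
     \<and> monoidal_adjunction S"

(* T : C -> LS(C) is a functor with ls \<circ> T = id (the latter is built into the representation) *)
definition T_functor :: "('co,'ca,'lo,'la) lnl_data \<Rightarrow> bool" where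
  "T_functor S \<longleftrightarrow>
     (\<forall>h X Y. chom S h X Y \<longrightarrow> lshom S (tFun S h) (X, tLam S X) (Y, tLam S Y))
   \<and> (\<forall>X. tFun S (cId S X) = lsId S (X, tLam S X))
   \<and> (\<forall>f g X Y Z. chom S f X Y \<longrightarrow> chom S g Y Z \<longrightarrow>
        tFun S (cComp S f g) = lsComp S (tLam S X) (tFun S f) (tFun S g))"

definition GDSC :: "('co,'ca,'lo,'la) lnl_data \<Rightarrow> bool" where
  "GDSC S \<longleftrightarrow> LNL S \<and> L_additive S \<and> L_products S \<and> T_functor S
     \<comment> \<open>(t.1)\<close>
     \<and> (\<forall>X Y. lsIso S (phiT S X Y) (cProd S X Y, tLam S (cProd S X Y))
                                   (cProd S X Y, lProd S (tLam S X) (tLam S Y)))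
     \<comment> \<open>(t.2)\<close>
     \<and> (\<forall>A. tLam S (UO S A) = A)
     \<comment> \<open>(t.3)\<close>
     \<and> (\<forall>f u X A Y B. lshom S (f, u) (X, A) (Y, B) \<longrightarrow>
          lsComp S A (WMor S (X, A) (f, u)) (iT2 S Y (UO S B))
            = lsComp S A (iT2 S X (UO S A)) (tFun S (compr S (X, A) (f, u))))"

end

theory Submission
  imports Defs
begin

text \<open>
  Both sides of the square lie over the comprehension g = {(f,u)} : X x U(A) -> Y x U(B), so only
  their fibre parts have to be compared. On the left, !^S commutes with reindexing along pi_1, so the
  fibre part is c ; (F(pi_1) (x) d) ; !u, where d is the fibre part of D^X_A. On the right, axiom
  (t.3) moves W(f,u) across i_2 and turns W(f,u) ; D^Y_B into D_2(g ; pi_2 ; eta). Naturality and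
  monoidality of eta give g ; pi_2 ; eta = <pi_1, pi_2 ; eta> ; k with k = {!^S(f,u)} ; pi_2, and a
  chain rule for D_2 along maps of the form <pi_1, h>, obtained by composing with the isomorphism phi
  whose components are T(pi_1) and T(pi_2), splits D_2 of this composite into d followed by D_2(k).
  A second use of (t.3) identifies D_2(k) with the fibre part (F(pi_1) (x) id) ; !u of W(!^S(f,u)).
\<close>

locale lnl_adjunction =
  fixes S :: "('co,'ca,'lo,'la) lnl_data"
  assumes LNL: "LNL S"
begin

lemma C_axioms: "C_category S" "C_cartesian S" "C_strict S"
  and L_axioms: "L_category S" "L_symmetric_strict_monoidal S"
  and functor_axioms: "functors S" "adjunction S"
  and monoidal_axioms: "U_lax_monoidal S" "F_strong_monoidal S" "monoidal_adjunction S"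
  using LNL unfolding LNL_def by auto

abbreviation "cD \<equiv> cDom S"
abbreviation "cC \<equiv> cCod S"
abbreviation "lD \<equiv> lDom S"
abbreviation "lC \<equiv> lCod S"

lemma cId_type [simp]: "cD (cId S X) = X" "cC (cId S X) = X"
  using C_axioms(1) unfolding C_category_def chom_def by auto

lemma cComp_type [simp]:
  "cC f = cD g \<Longrightarrow> cD (cComp S f g) = cD f"
  "cC f = cD g \<Longrightarrow> cC (cComp S f g) = cC g"
  using C_axioms(1) unfolding C_category_def chom_def by metis+

lemma cComp_id_left [simp]: "cD f = X \<Longrightarrow> cComp S (cId S X) f = f"
  and cComp_id_right [simp]: "cC f = Y \<Longrightarrow> cComp S f (cId S Y) = f"
  using C_axioms(1) unfolding C_category_def chom_def by auto

lemma cComp_assoc: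
  "cC f = cD g \<Longrightarrow> cC g = cD h \<Longrightarrow> cComp S (cComp S f g) h = cComp S f (cComp S g h)"
  using C_axioms(1) unfolding C_category_def chom_def by metis

lemma cPi_type [simp]:
  "cD (cPi1 S X Y) = cProd S X Y" "cC (cPi1 S X Y) = X"
  "cD (cPi2 S X Y) = cProd S X Y" "cC (cPi2 S X Y) = Y"
  using C_axioms(2) unfolding C_cartesian_def chom_def by auto

lemma cPair [simp]:
  "cD f = cD g \<Longrightarrow> cD (cPair S f g) = cD f"
  "cD f = cD g \<Longrightarrow> cC (cPair S f g) = cProd S (cC f) (cC g)"
  "cD f = cD g \<Longrightarrow> cC f = X \<Longrightarrow> cC g = Y \<Longrightarrow> cComp S (cPair S f g) (cPi1 S X Y) = f"
  "cD f = cD g \<Longrightarrow> cC f = X \<Longrightarrow> cC g = Y \<Longrightarrow> cComp S (cPair S f g) (cPi2 S X Y) = g"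
  using C_axioms(2) unfolding C_cartesian_def chom_def by metis+

lemma cPair_eta:
  "cC h = cProd S X Y \<Longrightarrow> cPair S (cComp S h (cPi1 S X Y)) (cComp S h (cPi2 S X Y)) = h"
  using C_axioms(2) unfolding C_cartesian_def chom_def by metis

lemma cPair_inject:
  "cPair S f g = cPair S f' g' \<Longrightarrow> cD f = cD g \<Longrightarrow> cD f' = cD g' \<Longrightarrow>
   cC f = cC f' \<Longrightarrow> cC g = cC g' \<Longrightarrow> f = f' \<and> g = g'"
  by (metis cPair(3,4))

lemma cBang_type [simp]: "cD (cBang S X) = X" "cC (cBang S X) = cTerm S"
  using C_axioms(2) unfolding C_cartesian_def chom_def by auto

lemma cBang_unique: "cC h = cTerm S \<Longrightarrow> h = cBang S (cD h)"
  using C_axioms(2) unfolding C_cartesian_def chom_def by metis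

lemma cComp_cPair:
  assumes "cC h = cD f" "cD f = cD g"
  shows "cComp S h (cPair S f g) = cPair S (cComp S h f) (cComp S h g)"
proof -
  have "cComp S h (cPair S f g)
      = cPair S (cComp S (cComp S h (cPair S f g)) (cPi1 S (cC f) (cC g)))
                (cComp S (cComp S h (cPair S f g)) (cPi2 S (cC f) (cC g)))"
    using assms by (intro cPair_eta[symmetric]) simp
  also have "\<dots> = cPair S (cComp S h f) (cComp S h g)"
    using assms by (simp add: cComp_assoc)
  finally show ?thesis .
qed

lemma C_strict_eqs:
  "cProd S (cProd S X Y) Z = cProd S X (cProd S Y Z)"
  "cPi1 S (cProd S X Y) Z = cPair S (cPi1 S X (cProd S Y Z)) (cComp S (cPi2 S X (cProd S Y Z)) (cPi1 S Y Z))"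
  "cPi2 S (cProd S X Y) Z = cComp S (cPi2 S X (cProd S Y Z)) (cPi2 S Y Z)"
  "cProd S (cTerm S) X = X" "cPi2 S (cTerm S) X = cId S X"
  using C_axioms(3) unfolding C_strict_def by auto

lemma cProdM_type [simp]:
  "cD (cProdM S f g) = cProd S (cD f) (cD g)" "cC (cProdM S f g) = cProd S (cC f) (cC g)"
  unfolding cProdM_def by simp_all

lemma cPair_cProdM:
  "cD p = cD q \<Longrightarrow> cC p = cD f \<Longrightarrow> cC q = cD g \<Longrightarrow>
   cComp S (cPair S p q) (cProdM S f g) = cPair S (cComp S p f) (cComp S q g)"
  unfolding cProdM_def by (simp add: cComp_cPair cComp_assoc[symmetric])

lemma cDiag_type [simp]: "cD (cDiag S X) = X" "cC (cDiag S X) = cProd S X X"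
  unfolding cDiag_def by simp_all

lemma cDiag_nat: "cComp S f (cDiag S (cC f)) = cComp S (cDiag S (cD f)) (cProdM S f f)"
  unfolding cDiag_def by (simp add: cComp_cPair cPair_cProdM)

lemma cPair_cBang_cId: "cPair S (cBang S X) (cId S X) = cId S X"
proof -
  have "cPi1 S (cTerm S) X = cBang S X"
    using cBang_unique[of "cPi1 S (cTerm S) X"] by (simp add: C_strict_eqs)
  moreover have "cPair S (cComp S (cId S X) (cPi1 S (cTerm S) X)) (cComp S (cId S X) (cPi2 S (cTerm S) X))
      = cId S X"
    by (rule cPair_eta) (simp add: C_strict_eqs)
  ultimately show ?thesis by (simp add: C_strict_eqs)
qed

lemma cDiag_coassoc: "cPair S (cDiag S X) (cId S X) = cPair S (cId S X) (cDiag S X)"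
proof -
  define h where "h = cPair S (cDiag S X) (cId S X)"
  let ?p1 = "cPi1 S X (cProd S X X)" and ?p2 = "cPi2 S X (cProd S X X)"
  have h_type: "cD h = X" "cC h = cProd S X (cProd S X X)"
    unfolding h_def by (simp_all add: C_strict_eqs)
  have "cPair S (cComp S h ?p1) (cComp S (cComp S h ?p2) (cPi1 S X X)) = cComp S h (cPi1 S (cProd S X X) X)"
    unfolding C_strict_eqs(2) using h_type by (simp add: cComp_cPair cComp_assoc)
  also have "\<dots> = cPair S (cId S X) (cId S X)"
    unfolding h_def cDiag_def by simp
  finally have h_p1: "cComp S h ?p1 = cId S X" and h_p2_p1: "cComp S (cComp S h ?p2) (cPi1 S X X) = cId S X"
    using h_type by (auto dest!: cPair_inject)
  have "cComp S (cComp S h ?p2) (cPi2 S X X) = cComp S h (cPi2 S (cProd S X X) X)"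
    using h_type by (simp add: C_strict_eqs(3) cComp_assoc)
  also have "\<dots> = cId S X"
    unfolding h_def by simp
  finally have "cComp S h ?p2 = cDiag S X"
    using cPair_eta[of "cComp S h ?p2" X X] h_p2_p1 h_type unfolding cDiag_def by simp
  then show ?thesis
    using cPair_eta[of h X "cProd S X X"] h_p1 h_type unfolding h_def by simp
qed

lemma lId_type [simp]: "lD (lId S X) = X" "lC (lId S X) = X"
  using L_axioms(1) unfolding L_category_def lhom_def by auto

lemma lComp_type [simp]:
  "lC f = lD g \<Longrightarrow> lD (lComp S f g) = lD f"
  "lC f = lD g \<Longrightarrow> lC (lComp S f g) = lC g"
  using L_axioms(1) unfolding L_category_def lhom_def by metis+

lemma lComp_id_left [simp]: "lD f = X \<Longrightarrow> lComp S (lId S X) f = f"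
  and lComp_id_right [simp]: "lC f = Y \<Longrightarrow> lComp S f (lId S Y) = f"
  using L_axioms(1) unfolding L_category_def lhom_def by auto

lemma lComp_assoc:
  "lC f = lD g \<Longrightarrow> lC g = lD h \<Longrightarrow> lComp S (lComp S f g) h = lComp S f (lComp S g h)"
  using L_axioms(1) unfolding L_category_def lhom_def by metis

lemma lTenM_type [simp]:
  "lD (lTenM S f g) = lTen S (lD f) (lD g)" "lC (lTenM S f g) = lTen S (lC f) (lC g)"
proof -
  have "lhom S (lTenM S f g) (lTen S (lD f) (lD g)) (lTen S (lC f) (lC g))"
    using L_axioms(2) unfolding L_symmetric_strict_monoidal_def
    by (elim conjE allE impE) (simp_all add: lhom_def)
  then show "lD (lTenM S f g) = lTen S (lD f) (lD g)" "lC (lTenM S f g) = lTen S (lC f) (lC g)"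
    unfolding lhom_def by simp_all
qed

lemma lTenM_id [simp]: "lTenM S (lId S A) (lId S B) = lId S (lTen S A B)"
  using L_axioms(2) unfolding L_symmetric_strict_monoidal_def by (elim conjE allE)

lemma lTenM_interchange:
  "lC f = lD f' \<Longrightarrow> lC g = lD g' \<Longrightarrow>
   lTenM S (lComp S f f') (lComp S g g') = lComp S (lTenM S f g) (lTenM S f' g')"
  using L_axioms(2) unfolding L_symmetric_strict_monoidal_def
  by (elim conjE allE impE) (simp_all add: lhom_def)

lemma L_strict_eqs [simp]:
  "lTen S (lTen S A B) C = lTen S A (lTen S B C)"
  "lTen S (lUnit S) A = A" "lTen S A (lUnit S) = A"
  "lTenM S (lTenM S f g) h = lTenM S f (lTenM S g h)"
  "lTenM S (lId S (lUnit S)) f = f" "lTenM S f (lId S (lUnit S)) = f"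
  using L_axioms(2) unfolding L_symmetric_strict_monoidal_def by auto

lemma lTenM_interchange_assoc [simp]:
  "lC f = lD f' \<Longrightarrow> lC g = lD g' \<Longrightarrow> lTen S (lC f') (lC g') = lD h \<Longrightarrow>
   lComp S (lTenM S f g) (lComp S (lTenM S f' g') h) = lComp S (lTenM S (lComp S f f') (lComp S g g')) h"
  by (simp add: lTenM_interchange lComp_assoc)

lemma lTenM_unit_comp:
  "lC w = lUnit S \<Longrightarrow> lC a = lD b \<Longrightarrow> lComp S (lTenM S w a) b = lTenM S w (lComp S a b)"
  using lTenM_interchange[of w "lId S (lUnit S)" a b] by simp

lemma lInverse_unique:
  assumes "lComp S b a = lId S (lD b)" "lComp S a b' = lId S (lD a)"
    and "lC b = lD a" "lC a = lD b'" "lD b = lC a"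
  shows "b = b'"
proof -
  have "b = lComp S b (lComp S a b')" using assms(2,3) by simp
  also have "\<dots> = lComp S (lComp S b a) b'" using assms(3,4) by (simp add: lComp_assoc)
  finally show ?thesis using assms(1,4,5) by simp
qed

lemma FM_type [simp]: "lD (FM S f) = FO S (cD f)" "lC (FM S f) = FO S (cC f)"
  using functor_axioms(1) unfolding functors_def lhom_def chom_def by metis+

lemma FM_id [simp]: "FM S (cId S X) = lId S (FO S X)"
  using functor_axioms(1) unfolding functors_def by metis

lemma FM_comp: "cC f = cD g \<Longrightarrow> FM S (cComp S f g) = lComp S (FM S f) (FM S g)"
  using functor_axioms(1) unfolding functors_def chom_def by metis

lemma UM_type [simp]: "cD (UM S f) = UO S (lD f)" "cC (UM S f) = UO S (lC f)"
  using functor_axioms(1) unfolding functors_def lhom_def chom_def by metis+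

lemma UM_id [simp]: "UM S (lId S A) = cId S (UO S A)"
  using functor_axioms(1) unfolding functors_def by metis

lemma UM_comp: "lC f = lD g \<Longrightarrow> UM S (lComp S f g) = cComp S (UM S f) (UM S g)"
  using functor_axioms(1) unfolding functors_def lhom_def by metis

lemma adjEta_type [simp]: "cD (adjEta S X) = X" "cC (adjEta S X) = UO S (FO S X)"
  using functor_axioms(2) unfolding adjunction_def chom_def by metis+

lemma adjEta_nat: "cComp S f (adjEta S (cC f)) = cComp S (adjEta S (cD f)) (UM S (FM S f))"
  using functor_axioms(2) unfolding adjunction_def chom_def by metis

lemma monN_type [simp]:
  "cD (monN S A B) = cProd S (UO S A) (UO S B)" "cC (monN S A B) = UO S (lTen S A B)"
  using monoidal_axioms(1) unfolding U_lax_monoidal_def chom_def by metis+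

lemma monN_nat:
  "cComp S (cProdM S (UM S f) (UM S g)) (monN S (lC f) (lC g))
     = cComp S (monN S (lD f) (lD g)) (UM S (lTenM S f g))"
  using monoidal_axioms(1) unfolding U_lax_monoidal_def lhom_def by metis

lemma monM_type [simp]:
  "lD (monM S X Y) = lTen S (FO S X) (FO S Y)" "lC (monM S X Y) = FO S (cProd S X Y)"
  "lD (monMinv S X Y) = FO S (cProd S X Y)" "lC (monMinv S X Y) = lTen S (FO S X) (FO S Y)"
  "lD (monM1 S) = lUnit S" "lC (monM1 S) = FO S (cTerm S)"
  "lD (monM1inv S) = FO S (cTerm S)" "lC (monM1inv S) = lUnit S"
  using monoidal_axioms(2) unfolding F_strong_monoidal_def lhom_def by metis+

lemma monM_inverse [simp]:
  "lComp S (monM S X Y) (monMinv S X Y) = lId S (lTen S (FO S X) (FO S Y))"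
  "lComp S (monMinv S X Y) (monM S X Y) = lId S (FO S (cProd S X Y))"
  "lComp S (monM1 S) (monM1inv S) = lId S (lUnit S)"
  "lComp S (monM1inv S) (monM1 S) = lId S (FO S (cTerm S))"
  using monoidal_axioms(2) unfolding F_strong_monoidal_def by metis+

lemma monM_inverse_assoc [simp]:
  "lD h = lTen S (FO S X) (FO S Y) \<Longrightarrow> lComp S (monM S X Y) (lComp S (monMinv S X Y) h) = h"
  "lD h = FO S (cProd S X Y) \<Longrightarrow> lComp S (monMinv S X Y) (lComp S (monM S X Y) h) = h"
  "lD h = lUnit S \<Longrightarrow> lComp S (monM1 S) (lComp S (monM1inv S) h) = h"
  "lD h = FO S (cTerm S) \<Longrightarrow> lComp S (monM1inv S) (lComp S (monM1 S) h) = h"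
  by (simp_all add: lComp_assoc[symmetric])

lemma monM_nat:
  "lComp S (lTenM S (FM S f) (FM S g)) (monM S (cC f) (cC g))
     = lComp S (monM S (cD f) (cD g)) (FM S (cProdM S f g))"
  using monoidal_axioms(2) unfolding F_strong_monoidal_def chom_def by metis

lemma monM_assoc:
  "lComp S (lTenM S (monM S X Y) (lId S (FO S Z))) (monM S (cProd S X Y) Z)
     = lComp S (lTenM S (lId S (FO S X)) (monM S Y Z)) (monM S X (cProd S Y Z))"
  using monoidal_axioms(2) unfolding F_strong_monoidal_def by metis

lemma monM_unit_left:
  "lComp S (lTenM S (monM1 S) (lId S (FO S X))) (monM S (cTerm S) X) = lId S (FO S X)"
  using monoidal_axioms(2) unfolding F_strong_monoidal_def by metis

lemma adjEta_monoidal: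
  "cComp S (cComp S (cProdM S (adjEta S X) (adjEta S Y)) (monN S (FO S X) (FO S Y))) (UM S (monM S X Y))
     = adjEta S (cProd S X Y)"
  using monoidal_axioms(3) unfolding monoidal_adjunction_def by metis

lemma cPair_adjEta_cProdM:
  "cComp S (cComp S (cPair S (cPi1 S X C) (cComp S (cPi2 S X C) (adjEta S C)))
                    (cProdM S (adjEta S X) (cId S (UO S (FO S C)))))
           (cProdM S (UM S (FM S (adjEta S X))) (cId S (UO S (FO S C))))
     = cComp S (cProdM S (adjEta S X) (cId S C)) (cProdM S (adjEta S (UO S (FO S X))) (adjEta S C))"
proof -
  have "cComp S (cPair S (cPi1 S X C) (cComp S (cPi2 S X C) (adjEta S C))) (cProdM S (adjEta S X) (cId S (UO S (FO S C))))
      = cPair S (cComp S (cPi1 S X C) (adjEta S X)) (cComp S (cPi2 S X C) (adjEta S C))"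
    by (simp add: cPair_cProdM)
  moreover have "cComp S (adjEta S X) (UM S (FM S (adjEta S X))) = cComp S (adjEta S X) (adjEta S (UO S (FO S X)))"
    using adjEta_nat[of "adjEta S X"] by simp
  ultimately show ?thesis
    unfolding cProdM_def[of S "adjEta S X"] by (simp add: cPair_cProdM cComp_assoc)
qed

lemma monMinv_nat:
  "lComp S (FM S (cProdM S f g)) (monMinv S (cC f) (cC g))
     = lComp S (monMinv S (cD f) (cD g)) (lTenM S (FM S f) (FM S g))"
proof -
  have "lComp S (FM S (cProdM S f g)) (monMinv S (cC f) (cC g))
      = lComp S (monMinv S (cD f) (cD g))
          (lComp S (lComp S (monM S (cD f) (cD g)) (FM S (cProdM S f g))) (monMinv S (cC f) (cC g)))"
    by (simp add: lComp_assoc)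
  also have "\<dots> = lComp S (monMinv S (cD f) (cD g)) (lTenM S (FM S f) (FM S g))"
    by (simp add: monM_nat[symmetric] lComp_assoc)
  finally show ?thesis .
qed

lemma monMinv_unit_left: "monMinv S (cTerm S) X = lTenM S (monM1 S) (lId S (FO S X))"
proof -
  have "monMinv S (cTerm S) X
      = lComp S (lComp S (lTenM S (monM1 S) (lId S (FO S X))) (monM S (cTerm S) X)) (monMinv S (cTerm S) X)"
    using monM_unit_left[of X] C_strict_eqs(4)[of X] by simp
  then show ?thesis by (simp add: lComp_assoc)
qed

lemma monMinv_assoc:
  "lComp S (monMinv S (cProd S X Y) Z) (lTenM S (monMinv S X Y) (lId S (FO S Z)))
     = lComp S (monMinv S X (cProd S Y Z)) (lTenM S (lId S (FO S X)) (monMinv S Y Z))"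
proof (rule lInverse_unique[where a="lComp S (lTenM S (monM S X Y) (lId S (FO S Z))) (monM S (cProd S X Y) Z)"])
  show "lComp S (lComp S (monMinv S (cProd S X Y) Z) (lTenM S (monMinv S X Y) (lId S (FO S Z))))
      (lComp S (lTenM S (monM S X Y) (lId S (FO S Z))) (monM S (cProd S X Y) Z))
    = lId S (lD (lComp S (monMinv S (cProd S X Y) Z) (lTenM S (monMinv S X Y) (lId S (FO S Z)))))"
    by (simp add: lComp_assoc lTenM_interchange[symmetric])
  show "lComp S (lComp S (lTenM S (monM S X Y) (lId S (FO S Z))) (monM S (cProd S X Y) Z))
      (lComp S (monMinv S X (cProd S Y Z)) (lTenM S (lId S (FO S X)) (monMinv S Y Z)))
    = lId S (lD (lComp S (lTenM S (monM S X Y) (lId S (FO S Z))) (monM S (cProd S X Y) Z)))"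
    unfolding monM_assoc by (simp add: lComp_assoc lTenM_interchange[symmetric] C_strict_eqs)
qed (simp_all add: monM_assoc C_strict_eqs)

lemma contr_type [simp]: "lD (contr S X) = FO S X" "lC (contr S X) = lTen S (FO S X) (FO S X)"
  unfolding contr_def by simp_all

lemma weak_type [simp]: "lD (weak S X) = FO S X" "lC (weak S X) = lUnit S"
  unfolding weak_def by simp_all

lemma weak_nat: "cC f = Y \<Longrightarrow> lComp S (FM S f) (weak S Y) = weak S (cD f)"
  using cBang_unique[of "cComp S f (cBang S (cC f))"]
  unfolding weak_def by (simp add: lComp_assoc[symmetric] FM_comp[symmetric])

lemma contr_nat:
  assumes "cC f = Y"
  shows "lComp S (FM S f) (contr S Y) = lComp S (contr S (cD f)) (lTenM S (FM S f) (FM S f))"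
proof -
  have "lComp S (FM S f) (contr S Y) = lComp S (FM S (cComp S f (cDiag S (cC f)))) (monMinv S (cC f) (cC f))"
    unfolding contr_def using assms by (simp add: lComp_assoc FM_comp)
  also have "\<dots> = lComp S (FM S (cDiag S (cD f))) (lComp S (FM S (cProdM S f f)) (monMinv S (cC f) (cC f)))"
    by (simp add: cDiag_nat FM_comp lComp_assoc)
  also have "\<dots> = lComp S (contr S (cD f)) (lTenM S (FM S f) (FM S f))"
    unfolding contr_def monMinv_nat by (simp add: lComp_assoc)
  finally show ?thesis .
qed

lemma contr_counit: "lComp S (contr S X) (lTenM S (weak S X) (lId S (FO S X))) = lId S (FO S X)"
proof -
  have "lTenM S (weak S X) (lId S (FO S X))
      = lComp S (lTenM S (FM S (cBang S X)) (FM S (cId S X))) (lTenM S (monM1inv S) (lId S (FO S X)))"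
    unfolding weak_def by (simp add: lTenM_interchange[symmetric])
  then have "lComp S (contr S X) (lTenM S (weak S X) (lId S (FO S X)))
      = lComp S (FM S (cDiag S X)) (lComp S (lComp S (monMinv S X X) (lTenM S (FM S (cBang S X)) (FM S (cId S X))))
          (lTenM S (monM1inv S) (lId S (FO S X))))"
    unfolding contr_def by (simp add: lComp_assoc)
  also have "\<dots> = lComp S (FM S (cDiag S X)) (lComp S (lComp S (FM S (cProdM S (cBang S X) (cId S X)))
          (monMinv S (cTerm S) X)) (lTenM S (monM1inv S) (lId S (FO S X))))"
    using monMinv_nat[of "cBang S X" "cId S X"] by simp
  also have "\<dots> = lComp S (FM S (cComp S (cDiag S X) (cProdM S (cBang S X) (cId S X))))
          (lComp S (monMinv S (cTerm S) X) (lTenM S (monM1inv S) (lId S (FO S X))))"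
    by (simp add: lComp_assoc FM_comp C_strict_eqs)
  also have "cComp S (cDiag S X) (cProdM S (cBang S X) (cId S X)) = cId S X"
    unfolding cDiag_def by (simp add: cPair_cProdM cPair_cBang_cId)
  also have "lComp S (monMinv S (cTerm S) X) (lTenM S (monM1inv S) (lId S (FO S X))) = lId S (FO S X)"
    unfolding monMinv_unit_left by (simp add: lTenM_interchange[symmetric])
  finally show ?thesis by (simp add: C_strict_eqs)
qed

lemma contr_coassoc:
  "lComp S (contr S X) (lTenM S (contr S X) (lId S (FO S X)))
     = lComp S (contr S X) (lTenM S (lId S (FO S X)) (contr S X))"
proof -
  have diag: "cComp S (cDiag S X) (cProdM S (cDiag S X) (cId S X))
      = cComp S (cDiag S X) (cProdM S (cId S X) (cDiag S X))"
    using cDiag_coassoc[of X] by (subst (1 3) cDiag_def) (simp add: cPair_cProdM)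
  have "lComp S (contr S X) (lTenM S (contr S X) (lId S (FO S X)))
      = lComp S (FM S (cDiag S X)) (lComp S (lComp S (monMinv S X X) (lTenM S (FM S (cDiag S X)) (FM S (cId S X))))
          (lTenM S (monMinv S X X) (lId S (FO S X))))"
    unfolding contr_def by (simp add: lComp_assoc lTenM_interchange[symmetric])
  also have "\<dots> = lComp S (FM S (cDiag S X)) (lComp S (lComp S (FM S (cProdM S (cDiag S X) (cId S X)))
          (monMinv S (cProd S X X) X)) (lTenM S (monMinv S X X) (lId S (FO S X))))"
    using monMinv_nat[of "cDiag S X" "cId S X"] by simp
  also have "\<dots> = lComp S (FM S (cComp S (cDiag S X) (cProdM S (cDiag S X) (cId S X))))
          (lComp S (monMinv S (cProd S X X) X) (lTenM S (monMinv S X X) (lId S (FO S X))))"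
    by (simp add: lComp_assoc FM_comp)
  also have "\<dots> = lComp S (FM S (cComp S (cDiag S X) (cProdM S (cId S X) (cDiag S X))))
          (lComp S (monMinv S X (cProd S X X)) (lTenM S (lId S (FO S X)) (monMinv S X X)))"
    unfolding monMinv_assoc diag C_strict_eqs ..
  also have "\<dots> = lComp S (FM S (cDiag S X)) (lComp S (lComp S (FM S (cProdM S (cId S X) (cDiag S X)))
          (monMinv S X (cProd S X X))) (lTenM S (lId S (FO S X)) (monMinv S X X)))"
    by (simp add: lComp_assoc FM_comp)
  also have "\<dots> = lComp S (FM S (cDiag S X)) (lComp S (lComp S (monMinv S X X) (lTenM S (FM S (cId S X)) (FM S (cDiag S X))))
          (lTenM S (lId S (FO S X)) (monMinv S X X)))"
    using monMinv_nat[of "cId S X" "cDiag S X"] by simp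
  also have "\<dots> = lComp S (contr S X) (lTenM S (lId S (FO S X)) (contr S X))"
    unfolding contr_def by (simp add: lComp_assoc lTenM_interchange[symmetric])
  finally show ?thesis .
qed

subsection \<open>The category LS(C)\<close>

lemma lshom_iff:
  "lshom S (f, u) (X, A) (Y, B) \<longleftrightarrow> cD f = X \<and> cC f = Y \<and> lD u = lTen S (FO S X) A \<and> lC u = B"
  by (auto simp: lshom_def chom_def lhom_def)

lemma lsComp_Pair:
  "lsComp S A (f, u) (g, v)
     = (cComp S f g, lComp S (lComp S (lTenM S (contr S (cD f)) (lId S A)) (lTenM S (FM S f) u)) v)"
  by (simp add: lsComp_def)

lemma lsComp_lshom:
  "lshom S a (X, A) (Y, B) \<Longrightarrow> lshom S b (Y, B) (Z, C) \<Longrightarrow> lshom S (lsComp S A a b) (X, A) (Z, C)"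
  by (cases a, cases b) (simp add: lshom_iff lsComp_Pair)

lemma contr_weak_cancel:
  assumes t: "lD t = lTen S (FO S X) A"
  shows "lComp S (lTenM S (contr S X) (lId S A)) (lTenM S (weak S X) t) = t"
proof -
  let ?c = "lTenM S (contr S X) (lId S A)" and ?w = "lTenM S (weak S X) (lId S (lTen S (FO S X) A))"
  have "lComp S ?c (lTenM S (lTenM S (weak S X) (lId S (FO S X))) (lId S A))
      = lTenM S (lComp S (contr S X) (lTenM S (weak S X) (lId S (FO S X)))) (lComp S (lId S A) (lId S A))"
    by (rule lTenM_interchange[symmetric]) simp_all
  then have "lComp S ?c ?w = lId S (lTen S (FO S X) A)"
    by (simp add: contr_counit)
  moreover have "lTenM S (weak S X) t = lComp S ?w t"
    using lTenM_interchange[of "weak S X" "lId S (lUnit S)" "lId S (lTen S (FO S X) A)" t] t by simp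
  ultimately show ?thesis
    using t by (simp del: lTenM_interchange_assoc add: lComp_assoc[symmetric])
qed

lemma lsComp_weak:
  assumes "lshom S (f, u) (X, A) (Y, B)" "lD v = B"
  shows "lsComp S A (f, u) (g, lTenM S (weak S Y) v) = (cComp S f g, lComp S u v)"
proof -
  have ty: "cD f = X" "cC f = Y" "lD u = lTen S (FO S X) A" "lC u = B"
    using assms(1) by (simp_all add: lshom_iff)
  have "lComp S (lComp S (lTenM S (contr S X) (lId S A)) (lTenM S (FM S f) u)) (lTenM S (weak S Y) v)
      = lComp S (lTenM S (contr S X) (lId S A)) (lTenM S (lComp S (FM S f) (weak S Y)) (lComp S u v))"
    using ty assms(2) by (simp add: lComp_assoc lTenM_interchange)
  also have "\<dots> = lComp S u v"
    using ty assms(2) by (simp add: weak_nat contr_weak_cancel)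
  finally show ?thesis
    using ty by (simp add: lsComp_Pair)
qed

lemma lsComp_lsId_right: "lshom S a (X, A) (Y, B) \<Longrightarrow> lsComp S A a (lsId S (Y, B)) = a"
  by (cases a) (simp add: lsId_def lsComp_weak lshom_iff)

lemma contr_lTenM_nat:
  assumes "cD f = X" "cC f = Y" "lD u = lTen S (FO S X) A" "lC u = B"
  shows "lComp S (lTenM S (FM S f) u) (lTenM S (contr S Y) (lId S B))
       = lComp S (lTenM S (contr S X) (lId S (lTen S (FO S X) A))) (lTenM S (FM S f) (lTenM S (FM S f) u))"
proof -
  let ?iXA = "lId S (lTen S (FO S X) A)"
  have "lComp S (lTenM S (FM S f) u) (lTenM S (contr S Y) (lId S B))
      = lTenM S (lComp S (FM S f) (contr S Y)) (lComp S ?iXA u)"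
    using lTenM_interchange[of "FM S f" "contr S Y" u "lId S B"] assms by simp
  also have "\<dots> = lTenM S (lComp S (contr S X) (lTenM S (FM S f) (FM S f))) (lComp S ?iXA u)"
    using assms by (simp add: contr_nat)
  also have "\<dots> = lComp S (lTenM S (contr S X) ?iXA) (lTenM S (FM S f) (lTenM S (FM S f) u))"
    using lTenM_interchange[of "contr S X" "lTenM S (FM S f) (FM S f)" ?iXA u] assms by simp
  finally show ?thesis .
qed

lemma lsComp_assoc_fibre:
  assumes ty: "lD u = lTen S (FO S X) A" "lC u = B" "lD v = lTen S (FO S Y) B"
    "cD f = X" "cC f = Y" "cD g = Y"
  shows "lComp S (lTenM S (contr S X) (lId S A)) (lTenM S (lComp S (FM S f) (FM S g))
            (lComp S (lTenM S (contr S X) (lId S A)) (lComp S (lTenM S (FM S f) u) v)))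
       = lComp S (lTenM S (contr S X) (lId S A)) (lComp S (lTenM S (FM S f) u)
            (lComp S (lTenM S (contr S Y) (lId S B)) (lTenM S (FM S g) v)))"
proof -
  let ?cX = "contr S X" and ?iA = "lId S A" and ?Ff = "FM S f" and ?Fg = "FM S g"
    and ?iX = "lId S (FO S X)" and ?iXA = "lId S (lTen S (FO S X) A)"
  let ?Q = "lComp S (lTenM S ?Ff u) v"
  have L2: "lTenM S (lComp S ?Ff ?Fg) (lComp S (lTenM S ?cX ?iA) ?Q)
      = lComp S (lTenM S ?iX (lTenM S ?cX ?iA)) (lTenM S (lComp S ?Ff ?Fg) ?Q)"
    using lTenM_interchange[of ?iX "lComp S ?Ff ?Fg" "lTenM S ?cX ?iA" ?Q] ty by simp
  have L3: "lComp S (lTenM S ?cX ?iA) (lTenM S ?iX (lTenM S ?cX ?iA)) = lTenM S (lComp S ?cX (lTenM S ?iX ?cX)) ?iA"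
    using lTenM_interchange[of ?cX "lTenM S ?iX ?cX" ?iA ?iA] ty by simp
  have R1: "lComp S (lTenM S ?Ff u) (lTenM S (contr S Y) (lId S B)) = lComp S (lTenM S ?cX ?iXA) (lTenM S ?Ff (lTenM S ?Ff u))"
    by (rule contr_lTenM_nat[OF ty(4,5,1,2)])
  have R2: "lComp S (lTenM S ?Ff (lTenM S ?Ff u)) (lTenM S ?Fg v) = lTenM S (lComp S ?Ff ?Fg) ?Q"
    using lTenM_interchange[of ?Ff ?Fg "lTenM S ?Ff u" v] ty by simp
  have R3: "lComp S (lTenM S ?cX ?iA) (lTenM S ?cX ?iXA) = lTenM S (lComp S ?cX (lTenM S ?cX ?iX)) ?iA"
    using lTenM_interchange[of ?cX "lTenM S ?cX ?iX" ?iA ?iA] ty by simp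
  have "lComp S (lTenM S ?cX ?iA) (lTenM S (lComp S ?Ff ?Fg) (lComp S (lTenM S ?cX ?iA) ?Q))
      = lComp S (lComp S (lTenM S ?cX ?iA) (lTenM S ?iX (lTenM S ?cX ?iA))) (lTenM S (lComp S ?Ff ?Fg) ?Q)"
    unfolding L2 using ty by (simp del: lTenM_interchange_assoc add: lComp_assoc)
  also have "\<dots> = lComp S (lTenM S (lComp S ?cX (lTenM S ?cX ?iX)) ?iA) (lTenM S (lComp S ?Ff ?Fg) ?Q)"
    unfolding L3 contr_coassoc ..
  also have "\<dots> = lComp S (lComp S (lTenM S ?cX ?iA) (lTenM S ?cX ?iXA))
      (lComp S (lTenM S ?Ff (lTenM S ?Ff u)) (lTenM S ?Fg v))"
    unfolding R2 R3 ..
  also have "\<dots> = lComp S (lTenM S ?cX ?iA)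
      (lComp S (lComp S (lTenM S ?Ff u) (lTenM S (contr S Y) (lId S B))) (lTenM S ?Fg v))"
    unfolding R1 using ty by (simp del: lTenM_interchange_assoc add: lComp_assoc)
  also have "\<dots> = lComp S (lTenM S ?cX ?iA)
      (lComp S (lTenM S ?Ff u) (lComp S (lTenM S (contr S Y) (lId S B)) (lTenM S ?Fg v)))"
    using ty by (simp del: lTenM_interchange_assoc add: lComp_assoc)
  finally show ?thesis .
qed

lemma lsComp_assoc:
  assumes "lshom S a (X, A) (Y, B)" "lshom S b (Y, B) (Z, C)" "lshom S c (Z, C) (W, D)"
  shows "lsComp S A (lsComp S A a b) c = lsComp S A a (lsComp S B b c)"
proof -
  obtain f u g v h w where abc: "a = (f, u)" "b = (g, v)" "c = (h, w)"
    by (metis prod.exhaust)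
  have ty: "cD f = X" "cC f = Y" "lD u = lTen S (FO S X) A" "lC u = B"
    "cD g = Y" "cC g = Z" "lD v = lTen S (FO S Y) B" "lC v = C"
    "cD h = Z" "cC h = W" "lD w = lTen S (FO S Z) C" "lC w = D"
    using assms unfolding abc by (simp_all add: lshom_iff)
  show ?thesis
    using lsComp_assoc_fibre[OF ty(3,4,7) ty(1,2,5)] ty unfolding abc
    by (simp del: lTenM_interchange_assoc add: lsComp_Pair cComp_assoc FM_comp lComp_assoc)
qed

subsection \<open>The comonad on LS(C) and comprehension\<close>

lemma bangS_lshom:
  "lshom S (f, u) (X, A) (Y, B) \<Longrightarrow>
   lshom S (bangS S (X, A) (f, u)) (X, FO S (UO S A)) (Y, FO S (UO S B))"
  by (simp add: lshom_iff bangS_def)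

lemma compr_type:
  "lshom S (f, u) (X, A) (Y, B) \<Longrightarrow>
   cD (compr S (X, A) (f, u)) = cProd S X (UO S A) \<and> cC (compr S (X, A) (f, u)) = cProd S Y (UO S B)"
  by (simp add: lshom_iff compr_def)

lemma WMor_lshom:
  "lshom S (f, u) (X, A) (Y, B) \<Longrightarrow>
   lshom S (WMor S (X, A) (f, u)) (cProd S X (UO S A), A) (cProd S Y (UO S B), B)"
  using compr_type[of f u X A Y B] by (simp add: lshom_iff WMor_def)

lemma bangS_reindex:
  assumes p: "cD p = Z" "cC p = X" and u: "lD u = lTen S (FO S X) A"
  shows "snd (bangS S (Z, A) (g, lComp S (lTenM S (FM S p) (lId S A)) u))
       = lComp S (lTenM S (FM S p) (lId S (FO S (UO S A)))) (snd (bangS S (X, A) (f, u)))"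
proof -
  let ?bA = "FO S (UO S A)" and ?Fp = "FM S p" and ?UFp = "UM S (FM S p)"
  let ?mX = "monM S (UO S (FO S X)) (UO S A)" and ?mZ = "monM S (UO S (FO S Z)) (UO S A)"
  let ?rest = "lComp S (FM S (monN S (FO S X) A)) (FM S (UM S u))"
  have n: "cComp S (monN S (FO S Z) A) (UM S (lTenM S ?Fp (lId S A)))
      = cComp S (cProdM S ?UFp (cId S (UO S A))) (monN S (FO S X) A)"
    using monN_nat[of ?Fp "lId S A"] p by simp
  have m: "lComp S ?mZ (FM S (cProdM S ?UFp (cId S (UO S A)))) = lComp S (lTenM S (FM S ?UFp) (lId S ?bA)) ?mX"
    using monM_nat[of ?UFp "cId S (UO S A)"] p by simp
  have eta: "lComp S (lTenM S (FM S (adjEta S Z)) (lId S ?bA)) (lTenM S (FM S ?UFp) (lId S ?bA))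
      = lComp S (lTenM S ?Fp (lId S ?bA)) (lTenM S (FM S (adjEta S X)) (lId S ?bA))"
    using adjEta_nat[of p] p
    by (simp add: lTenM_interchange[symmetric] FM_comp[symmetric])
  have "snd (bangS S (Z, A) (g, lComp S (lTenM S ?Fp (lId S A)) u))
      = lComp S (lTenM S (FM S (adjEta S Z)) (lId S ?bA)) (lComp S ?mZ
          (lComp S (FM S (cComp S (monN S (FO S Z) A) (UM S (lTenM S ?Fp (lId S A))))) (FM S (UM S u))))"
    using p u by (simp del: lTenM_interchange_assoc add: bangS_def lComp_assoc UM_comp FM_comp)
  also have "\<dots> = lComp S (lTenM S (FM S (adjEta S Z)) (lId S ?bA))
      (lComp S (lComp S ?mZ (FM S (cProdM S ?UFp (cId S (UO S A))))) ?rest)"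
    unfolding n using p u by (simp del: lTenM_interchange_assoc add: lComp_assoc FM_comp)
  also have "\<dots> = lComp S (lComp S (lTenM S (FM S (adjEta S Z)) (lId S ?bA)) (lTenM S (FM S ?UFp) (lId S ?bA)))
      (lComp S ?mX ?rest)"
    unfolding m using p u by (simp del: lTenM_interchange_assoc add: lComp_assoc)
  also have "\<dots> = lComp S (lTenM S ?Fp (lId S ?bA)) (snd (bangS S (X, A) (f, u)))"
    unfolding eta using p u by (simp del: lTenM_interchange_assoc add: bangS_def lComp_assoc)
  finally show ?thesis .
qed

lemma compr_adjEta:
  assumes "lshom S (f, u) (X, A) (Y, B)"
  shows "cComp S (compr S (X, A) (f, u)) (cComp S (cPi2 S Y (UO S B)) (adjEta S (UO S B)))
       = cComp S (cPair S (cPi1 S X (UO S A)) (cComp S (cPi2 S X (UO S A)) (adjEta S (UO S A))))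
           (cComp S (compr S (X, FO S (UO S A)) (bangS S (X, A) (f, u))) (cPi2 S Y (UO S (FO S (UO S B)))))"
proof -
  have ty: "cD f = X" "cC f = Y" "lD u = lTen S (FO S X) A" "lC u = B"
    using assms by (simp_all add: lshom_iff)
  let ?UA = "UO S A" and ?UB = "UO S B" and ?FX = "FO S X" and ?bA = "FO S (UO S A)"
  let ?eX = "adjEta S X" and ?eUFX = "adjEta S (UO S (FO S X))" and ?eUA = "adjEta S (UO S A)"
  let ?P = "cPair S (cPi1 S X ?UA) (cComp S (cPi2 S X ?UA) ?eUA)"
  let ?nu = "cComp S (monN S ?FX A) (UM S u)"
  let ?tail = "cComp S (UM S (monM S (UO S ?FX) ?UA)) (UM S (FM S ?nu))"
  have n: "cComp S (monN S ?FX ?bA) (UM S (lTenM S (FM S ?eX) (lId S ?bA)))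
      = cComp S (cProdM S (UM S (FM S ?eX)) (cId S (UO S ?bA))) (monN S (FO S (UO S ?FX)) ?bA)"
    using monN_nat[of "FM S ?eX" "lId S ?bA"] by simp
  have unit_monoidal: "cComp S (cProdM S ?eUFX ?eUA) (cComp S (monN S (FO S (UO S ?FX)) ?bA) (UM S (monM S (UO S ?FX) ?UA)))
      = adjEta S (cProd S (UO S ?FX) ?UA)"
    using adjEta_monoidal[of "UO S ?FX" ?UA] by (simp add: cComp_assoc)
  have unit_nat: "cComp S (adjEta S (cProd S (UO S ?FX) ?UA)) (UM S (FM S ?nu)) = cComp S ?nu (adjEta S ?UB)"
    using adjEta_nat[of ?nu] ty by simp
  have "cComp S ?P (cComp S (compr S (X, ?bA) (bangS S (X, A) (f, u))) (cPi2 S Y (UO S (FO S ?UB))))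
      = cComp S (cComp S ?P (cProdM S ?eX (cId S (UO S ?bA)))) (cComp S (monN S ?FX ?bA) (UM S (snd (bangS S (X, A) (f, u)))))"
    using ty by (simp add: compr_def bangS_def cComp_assoc)
  also have "\<dots> = cComp S (cComp S ?P (cProdM S ?eX (cId S (UO S ?bA))))
      (cComp S (cComp S (monN S ?FX ?bA) (UM S (lTenM S (FM S ?eX) (lId S ?bA)))) ?tail)"
    using ty by (simp add: bangS_def cComp_assoc UM_comp FM_comp)
  also have "\<dots> = cComp S (cComp S (cComp S ?P (cProdM S ?eX (cId S (UO S ?bA))))
        (cProdM S (UM S (FM S ?eX)) (cId S (UO S ?bA))))
      (cComp S (monN S (FO S (UO S ?FX)) ?bA) ?tail)"
    unfolding n using ty by (simp add: cComp_assoc)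
  also have "\<dots> = cComp S (cProdM S ?eX (cId S ?UA))
      (cComp S (cComp S (cProdM S ?eUFX ?eUA) (cComp S (monN S (FO S (UO S ?FX)) ?bA) (UM S (monM S (UO S ?FX) ?UA))))
        (UM S (FM S ?nu)))"
    unfolding cPair_adjEta_cProdM using ty by (simp add: cComp_assoc)
  also have "\<dots> = cComp S (cProdM S ?eX (cId S ?UA)) (cComp S ?nu (adjEta S ?UB))"
    unfolding unit_monoidal unit_nat ..
  also have "\<dots> = cComp S (cComp S (compr S (X, A) (f, u)) (cPi2 S Y ?UB)) (adjEta S ?UB)"
    using ty by (simp add: compr_def cComp_assoc)
  finally show ?thesis
    using ty by (simp add: compr_def cComp_assoc[symmetric])
qed

end

locale gdsc =
  fixes S :: "('co,'ca,'lo,'la) lnl_data"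
  assumes GDSC: "GDSC S"

sublocale gdsc \<subseteq> lnl_adjunction
  using GDSC unfolding GDSC_def by unfold_locales simp

context gdsc
begin

lemma L_additive: "L_additive S"
  and L_products: "L_products S"
  and T_functor: "T_functor S"
  and phiT_iso: "lsIso S (phiT S X Y) (cProd S X Y, tLam S (cProd S X Y))
                   (cProd S X Y, lProd S (tLam S X) (tLam S Y))"
  and tLam_UO [simp]: "tLam S (UO S A) = A"
  and WMor_iT2: "lshom S (f, u) (X, A) (Y, B) \<Longrightarrow>
        lsComp S A (WMor S (X, A) (f, u)) (iT2 S Y (UO S B))
          = lsComp S A (iT2 S X (UO S A)) (tFun S (compr S (X, A) (f, u)))"
  using GDSC unfolding GDSC_def by blast+

lemma lPi_type [simp]:
  "lD (lPi1 S X Y) = lProd S X Y" "lC (lPi1 S X Y) = X"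
  "lD (lPi2 S X Y) = lProd S X Y" "lC (lPi2 S X Y) = Y"
  using L_products unfolding L_products_def lhom_def by auto

lemma lPair [simp]:
  "lD f = lD g \<Longrightarrow> lD (lPair S f g) = lD f"
  "lD f = lD g \<Longrightarrow> lC (lPair S f g) = lProd S (lC f) (lC g)"
  "lD f = lD g \<Longrightarrow> lC f = X \<Longrightarrow> lC g = Y \<Longrightarrow> lComp S (lPair S f g) (lPi1 S X Y) = f"
  "lD f = lD g \<Longrightarrow> lC f = X \<Longrightarrow> lC g = Y \<Longrightarrow> lComp S (lPair S f g) (lPi2 S X Y) = g"
  using L_products unfolding L_products_def lhom_def by metis+

lemma lPair_eta:
  "lC h = lProd S X Y \<Longrightarrow> lPair S (lComp S h (lPi1 S X Y)) (lComp S h (lPi2 S X Y)) = h"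
  using L_products unfolding L_products_def lhom_def by metis

lemma lComp_lPair:
  assumes "lC h = lD f" "lD f = lD g"
  shows "lComp S h (lPair S f g) = lPair S (lComp S h f) (lComp S h g)"
proof -
  have "lComp S h (lPair S f g)
      = lPair S (lComp S (lComp S h (lPair S f g)) (lPi1 S (lC f) (lC g)))
                (lComp S (lComp S h (lPair S f g)) (lPi2 S (lC f) (lC g)))"
    using assms by (intro lPair_eta[symmetric]) simp
  also have "\<dots> = lPair S (lComp S h f) (lComp S h g)"
    using assms by (simp add: lComp_assoc)
  finally show ?thesis .
qed

lemma lZero_type [simp]: "lD (lZero S A B) = A" "lC (lZero S A B) = B"
  using L_additive unfolding L_additive_def lhom_def by auto

lemma lZero_comp [simp]:
  "lC f = A \<Longrightarrow> lComp S f (lZero S A C) = lZero S (lD f) C"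
  "lD f = B \<Longrightarrow> lComp S (lZero S A B) f = lZero S A (lC f)"
  using L_additive unfolding L_additive_def lhom_def by metis+

lemma lTenM_zero [simp]:
  "lTenM S (lZero S A B) h = lZero S (lTen S A (lD h)) (lTen S B (lC h))"
  "lTenM S h (lZero S A B) = lZero S (lTen S (lD h) A) (lTen S (lC h) B)"
  using L_additive unfolding L_additive_def lhom_def by metis+

lemma lInj2 [simp]:
  "lD (lInj2 S A B) = B" "lC (lInj2 S A B) = lProd S A B"
  "lComp S (lInj2 S A B) (lPi1 S A B) = lZero S B A" "lComp S (lInj2 S A B) (lPi2 S A B) = lId S B"
  by (simp_all add: lInj2_def)

lemma tMor_type:
  "lD (tMor S h) = lTen S (FO S (cD h)) (tLam S (cD h))" "lC (tMor S h) = tLam S (cC h)"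
  using T_functor unfolding T_functor_def lshom_def tFun_def chom_def lhom_def by auto

lemma tFun_lshom: "cD h = X \<Longrightarrow> cC h = Y \<Longrightarrow> lshom S (tFun S h) (X, tLam S X) (Y, tLam S Y)"
  by (simp add: tFun_def lshom_iff tMor_type)

lemma tFun_comp:
  "cC f = cD g \<Longrightarrow> tFun S (cComp S f g) = lsComp S (tLam S (cD f)) (tFun S f) (tFun S g)"
  using T_functor unfolding T_functor_def chom_def by metis

lemma lsComp_lsPair:
  assumes "cC f = cD p" "cD p = cD q" "lD s = lD t"
    "lD s = lTen S (FO S (cC f)) (lC u)" "lD u = lTen S (FO S (cD f)) A"
  shows "lsComp S A (f, u) (lsPair S (p, s) (q, t))
       = lsPair S (lsComp S A (f, u) (p, s)) (lsComp S A (f, u) (q, t))"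
  using assms by (simp add: lsComp_Pair lsPair_def cComp_cPair) (rule lComp_lPair; simp)

lemma phiT_eq:
  "phiT S X Y = (cId S (cProd S X Y), lPair S (tMor S (cPi1 S X Y)) (tMor S (cPi2 S X Y)))"
  using cPair_eta[of "cId S (cProd S X Y)" X Y] by (simp add: phiT_def lsPair_def tFun_def)

lemma phiT_lshom:
  "lshom S (phiT S X Y) (cProd S X Y, tLam S (cProd S X Y)) (cProd S X Y, lProd S (tLam S X) (tLam S Y))"
  unfolding phiT_eq lshom_iff by (simp add: tMor_type)

lemma phiInv_inverse:
  "lshom S (phiInv S X Y) (cProd S X Y, lProd S (tLam S X) (tLam S Y)) (cProd S X Y, tLam S (cProd S X Y))"
  "lsComp S (tLam S (cProd S X Y)) (phiT S X Y) (phiInv S X Y) = lsId S (cProd S X Y, tLam S (cProd S X Y))"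
  "lsComp S (lProd S (tLam S X) (tLam S Y)) (phiInv S X Y) (phiT S X Y)
     = lsId S (cProd S X Y, lProd S (tLam S X) (tLam S Y))"
  using someI_ex[OF phiT_iso[unfolded lsIso_def snd_conv, THEN conjunct2]]
  unfolding phiInv_def by blast+

lemma phiInv_fst: "fst (phiInv S X Y) = cId S (cProd S X Y)"
proof -
  have "cComp S (cId S (cProd S X Y)) (fst (phiInv S X Y)) = cId S (cProd S X Y)"
    using arg_cong[OF phiInv_inverse(2), of fst] by (simp add: phiT_eq lsComp_def lsId_def)
  moreover have "cD (fst (phiInv S X Y)) = cProd S X Y"
    using phiInv_inverse(1) by (simp add: lshom_def chom_def)
  ultimately show ?thesis
    by simp
qed

lemma phiT_cancel:
  assumes "lshom S a (Z, A) (cProd S X Y, tLam S (cProd S X Y))"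
    and "lshom S b (Z, A) (cProd S X Y, tLam S (cProd S X Y))"
    and "lsComp S A a (phiT S X Y) = lsComp S A b (phiT S X Y)"
  shows "a = b"
proof -
  have "c = lsComp S A (lsComp S A c (phiT S X Y)) (phiInv S X Y)"
    if "lshom S c (Z, A) (cProd S X Y, tLam S (cProd S X Y))" for c
    using lsComp_assoc[OF that phiT_lshom phiInv_inverse(1)] phiInv_inverse(2) lsComp_lsId_right[OF that] by simp
  then show ?thesis
    using assms by metis
qed

lemma lsInj2_lshom: "lshom S (lsInj2 S Z A B) (Z, B) (Z, lProd S A B)"
  by (simp add: lsInj2_def lshom_iff)

lemma iT2_lshom: "lshom S (iT2 S X Y) (cProd S X Y, tLam S Y) (cProd S X Y, tLam S (cProd S X Y))"
  unfolding iT2_def by (rule lsComp_lshom[OF lsInj2_lshom phiInv_inverse(1)])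

lemma iT2_UO_lshom:
  "lshom S (iT2 S X (UO S A)) (cProd S X (UO S A), A) (cProd S X (UO S A), tLam S (cProd S X (UO S A)))"
  using iT2_lshom[of X "UO S A"] by simp

lemma iT2_vertical: "iT2 S X Y = (cId S (cProd S X Y), snd (iT2 S X Y))"
proof -
  have "fst (iT2 S X Y) = cId S (cProd S X Y)"
    unfolding iT2_def lsInj2_def by (simp add: lsComp_def phiInv_fst)
  then show ?thesis
    by (metis prod.collapse)
qed

lemma iT2_phiT: "lsComp S (tLam S Y) (iT2 S X Y) (phiT S X Y) = lsInj2 S (cProd S X Y) (tLam S X) (tLam S Y)"
  unfolding iT2_def
  using lsComp_assoc[OF lsInj2_lshom phiInv_inverse(1) phiT_lshom] phiInv_inverse(3)
    lsComp_lsId_right[OF lsInj2_lshom] by simp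

lemma iT2_tFun_pi:
  "lsComp S (tLam S Y) (iT2 S X Y) (tFun S (cPi1 S X Y))
     = (cPi1 S X Y, lZero S (lTen S (FO S (cProd S X Y)) (tLam S Y)) (tLam S X))"
  "lsComp S (tLam S Y) (iT2 S X Y) (tFun S (cPi2 S X Y))
     = (cPi2 S X Y, lTenM S (weak S (cProd S X Y)) (lId S (tLam S Y)))"
proof -
  let ?XY = "cProd S X Y" and ?P = "lProd S (tLam S X) (tLam S Y)"
  let ?p1 = "(cPi1 S X Y, lTenM S (weak S ?XY) (lPi1 S (tLam S X) (tLam S Y)))"
    and ?p2 = "(cPi2 S X Y, lTenM S (weak S ?XY) (lPi2 S (tLam S X) (tLam S Y)))"
  have tFun_pi: "tFun S (cPi1 S X Y) = lsComp S (tLam S ?XY) (phiT S X Y) ?p1"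
    "tFun S (cPi2 S X Y) = lsComp S (tLam S ?XY) (phiT S X Y) ?p2"
    unfolding phiT_eq by (subst lsComp_weak; simp add: lshom_iff tMor_type tFun_def)+
  have pi_lshom: "lshom S ?p1 (?XY, ?P) (X, tLam S X)" "lshom S ?p2 (?XY, ?P) (Y, tLam S Y)"
    by (simp_all add: lshom_iff)
  show "lsComp S (tLam S Y) (iT2 S X Y) (tFun S (cPi1 S X Y))
      = (cPi1 S X Y, lZero S (lTen S (FO S ?XY) (tLam S Y)) (tLam S X))"
    unfolding tFun_pi lsComp_assoc[OF iT2_lshom phiT_lshom pi_lshom(1), symmetric] iT2_phiT lsInj2_def
    by (subst lsComp_weak) (simp_all add: lshom_iff lTenM_unit_comp)
  show "lsComp S (tLam S Y) (iT2 S X Y) (tFun S (cPi2 S X Y))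
      = (cPi2 S X Y, lTenM S (weak S ?XY) (lId S (tLam S Y)))"
    unfolding tFun_pi lsComp_assoc[OF iT2_lshom phiT_lshom pi_lshom(2), symmetric] iT2_phiT lsInj2_def
    by (subst lsComp_weak) (simp_all add: lshom_iff lTenM_unit_comp)
qed

subsection \<open>The differential\<close>

lemma iT2_tFun:
  assumes "cD h = cProd S X Y"
  shows "lsComp S (tLam S Y) (iT2 S X Y) (tFun S h) = (h, snd (diffD2 S X Y h))"
proof -
  obtain i where "iT2 S X Y = (cId S (cProd S X Y), i)"
    by (rule that, rule iT2_vertical)
  then show ?thesis
    using assms by (simp add: diffD2_def diffD_def tFun_def lsComp_Pair)
qed

lemma diffD2_vertical:
  assumes "cD h = cProd S X Y"
  shows "diffD2 S X Y h = (cId S (cProd S X Y), snd (diffD2 S X Y h))"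
proof -
  obtain i where "iT2 S X Y = (cId S (cProd S X Y), i)"
    by (rule that, rule iT2_vertical)
  then show ?thesis
    using assms by (simp add: diffD2_def diffD_def lsComp_Pair)
qed

lemma diffD2_type:
  assumes "cD h = cProd S X Y"
  shows "lD (snd (diffD2 S X Y h)) = lTen S (FO S (cProd S X Y)) (tLam S Y)"
    and "lC (snd (diffD2 S X Y h)) = tLam S (cC h)"
proof -
  have "lshom S (lsComp S (tLam S Y) (iT2 S X Y) (tFun S h)) (cProd S X Y, tLam S Y) (cC h, tLam S (cC h))"
    by (rule lsComp_lshom[OF iT2_lshom tFun_lshom[OF assms refl]])
  then show "lD (snd (diffD2 S X Y h)) = lTen S (FO S (cProd S X Y)) (tLam S Y)"
    and "lC (snd (diffD2 S X Y h)) = tLam S (cC h)"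
    unfolding iT2_tFun[OF assms] lshom_iff by simp_all
qed

lemma tFun_cPair_phiT:
  assumes "cD h = cProd S X Y"
  shows "lsComp S (tLam S (cProd S X Y)) (tFun S (cPair S (cPi1 S X Y) h)) (phiT S X (cC h))
       = lsPair S (tFun S (cPi1 S X Y)) (tFun S h)"
proof -
  let ?P = "cPair S (cPi1 S X Y) h"
  have "lsComp S (tLam S (cProd S X Y)) (tFun S ?P) (phiT S X (cC h))
      = lsPair S (lsComp S (tLam S (cProd S X Y)) (tFun S ?P) (tFun S (cPi1 S X (cC h))))
                 (lsComp S (tLam S (cProd S X Y)) (tFun S ?P) (tFun S (cPi2 S X (cC h))))"
    unfolding phiT_def tFun_def using assms by (subst lsComp_lsPair) (simp_all add: tMor_type)
  then show ?thesis
    using tFun_comp[of ?P "cPi1 S X (cC h)"] tFun_comp[of ?P "cPi2 S X (cC h)"] assms by simp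
qed

lemma iT2_lsPair_tFun:
  assumes "cD p = cProd S X Y" "cD q = cProd S X Y"
  shows "lsComp S (tLam S Y) (iT2 S X Y) (lsPair S (tFun S p) (tFun S q))
       = lsPair S (lsComp S (tLam S Y) (iT2 S X Y) (tFun S p)) (lsComp S (tLam S Y) (iT2 S X Y) (tFun S q))"
proof -
  obtain i where i: "iT2 S X Y = (cId S (cProd S X Y), i)"
    by (rule that, rule iT2_vertical)
  then have "lD i = lTen S (FO S (cProd S X Y)) (tLam S Y)" "lC i = tLam S (cProd S X Y)"
    using iT2_lshom[of X Y] by (simp_all add: lshom_iff)
  then show ?thesis
    unfolding i tFun_def using assms by (subst lsComp_lsPair) (simp_all add: tMor_type)
qed

lemma iT2_tFun_cPair:
  assumes h: "cD h = cProd S X Y"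
  shows "lsComp S (tLam S Y) (iT2 S X Y) (tFun S (cPair S (cPi1 S X Y) h))
       = lsComp S (tLam S Y) (cPair S (cPi1 S X Y) h, snd (diffD2 S X Y h)) (iT2 S X (cC h))"
proof -
  let ?V = "cC h" and ?XY = "cProd S X Y" and ?P = "cPair S (cPi1 S X Y) h" and ?d = "snd (diffD2 S X Y h)"
  have P_lshom: "lshom S (?P, ?d) (?XY, tLam S Y) (cProd S X ?V, tLam S ?V)"
    using h by (simp add: lshom_iff diffD2_type)
  have iT2_tFun_P: "lshom S (lsComp S (tLam S Y) (iT2 S X Y) (tFun S ?P)) (?XY, tLam S Y) (cProd S X ?V, tLam S (cProd S X ?V))"
    using lsComp_lshom[OF iT2_lshom tFun_lshom[of ?P]] h by simp
  have "lsComp S (tLam S Y) (lsComp S (tLam S Y) (iT2 S X Y) (tFun S ?P)) (phiT S X ?V)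
      = lsComp S (tLam S Y) (iT2 S X Y) (lsPair S (tFun S (cPi1 S X Y)) (tFun S h))"
    using lsComp_assoc[OF iT2_lshom tFun_lshom[of ?P] phiT_lshom] tFun_cPair_phiT[OF h] h by simp
  also have "\<dots> = (?P, lPair S (lZero S (lTen S (FO S ?XY) (tLam S Y)) (tLam S X)) ?d)"
    unfolding iT2_lsPair_tFun[OF cPi_type(1) h] by (simp add: iT2_tFun_pi(1) iT2_tFun[OF h] lsPair_def)
  also have "\<dots> = lsComp S (tLam S Y) (?P, ?d) (lsInj2 S (cProd S X ?V) (tLam S X) (tLam S ?V))"
    unfolding lsInj2_def using h
    by (subst lsComp_weak[OF P_lshom]) (simp_all add: lInj2_def lComp_lPair diffD2_type)
  also have "\<dots> = lsComp S (tLam S Y) (lsComp S (tLam S Y) (?P, ?d) (iT2 S X ?V)) (phiT S X ?V)"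
    unfolding iT2_phiT[symmetric] using lsComp_assoc[OF P_lshom iT2_lshom phiT_lshom] by simp
  finally show ?thesis
    using phiT_cancel[OF iT2_tFun_P lsComp_lshom[OF P_lshom iT2_lshom]] by simp
qed

lemma diffD2_chain:
  assumes h: "cD h = cProd S X Y" and k: "cD k = cProd S X (cC h)"
  shows "snd (diffD2 S X Y (cComp S (cPair S (cPi1 S X Y) h) k))
       = snd (lsComp S (tLam S Y) (cPair S (cPi1 S X Y) h, snd (diffD2 S X Y h)) (diffD2 S X (cC h) k))"
proof -
  let ?P = "cPair S (cPi1 S X Y) h" and ?d = "snd (diffD2 S X Y h)"
  have P_lshom: "lshom S (?P, ?d) (cProd S X Y, tLam S Y) (cProd S X (cC h), tLam S (cC h))"
    using h by (simp add: lshom_iff diffD2_type)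
  have "(cComp S ?P k, snd (diffD2 S X Y (cComp S ?P k)))
      = lsComp S (tLam S Y) (iT2 S X Y) (lsComp S (tLam S (cProd S X Y)) (tFun S ?P) (tFun S k))"
    using iT2_tFun[of "cComp S ?P k"] tFun_comp[of ?P k] h k by simp
  also have "\<dots> = lsComp S (tLam S Y) (lsComp S (tLam S Y) (iT2 S X Y) (tFun S ?P)) (tFun S k)"
    using lsComp_assoc[OF iT2_lshom tFun_lshom[of ?P] tFun_lshom[of k]] h k by simp
  also have "\<dots> = lsComp S (tLam S Y) (?P, ?d) (lsComp S (tLam S (cC h)) (iT2 S X (cC h)) (tFun S k))"
    unfolding iT2_tFun_cPair[OF h]
    using lsComp_assoc[OF P_lshom iT2_lshom tFun_lshom[of k]] k by simp
  also have "\<dots> = lsComp S (tLam S Y) (?P, ?d) (k, snd (diffD2 S X (cC h) k))"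
    unfolding iT2_tFun[OF k] ..
  finally show ?thesis
    by (subst diffD2_vertical[OF k]) (simp add: lsComp_def)
qed

lemma WMor_diffD2:
  assumes fu: "lshom S (f, u) (X, A) (Y, B)" and h: "cD h = cProd S Y (UO S B)"
  shows "lsComp S A (WMor S (X, A) (f, u)) (diffD2 S Y (UO S B) h)
       = (compr S (X, A) (f, u), snd (diffD2 S X (UO S A) (cComp S (compr S (X, A) (f, u)) h)))"
proof -
  let ?g = "compr S (X, A) (f, u)" and ?Z = "cProd S X (UO S A)"
  have g: "cD ?g = ?Z" "cC ?g = cProd S Y (UO S B)"
    using compr_type[OF fu] by simp_all
  have D_lshom: "lshom S (diffD S h) (cProd S Y (UO S B), tLam S (cProd S Y (UO S B))) (cProd S Y (UO S B), tLam S (cC h))"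
    using h by (simp add: diffD_def lshom_iff tMor_type)
  obtain i where i: "iT2 S X (UO S A) = (cId S ?Z, i)"
    by (rule that, rule iT2_vertical)
  have "lsComp S A (WMor S (X, A) (f, u)) (diffD2 S Y (UO S B) h)
      = lsComp S A (lsComp S A (iT2 S X (UO S A)) (tFun S ?g)) (diffD S h)"
    unfolding diffD2_def WMor_iT2[OF fu, symmetric]
    using lsComp_assoc[OF WMor_lshom[OF fu] iT2_UO_lshom D_lshom] h by simp
  also have "\<dots> = lsComp S A (iT2 S X (UO S A)) (lsComp S (tLam S ?Z) (tFun S ?g) (diffD S h))"
    using lsComp_assoc[OF iT2_UO_lshom tFun_lshom[of ?g] D_lshom] g h by simp
  also have "lsComp S (tLam S ?Z) (tFun S ?g) (diffD S h) = (?g, tMor S (cComp S ?g h))"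
    using arg_cong[OF tFun_comp[of ?g h], of snd] g h
    by (simp add: lsComp_Pair diffD_def tFun_def)
  finally show ?thesis
    using g h by (simp add: i lsComp_Pair diffD2_def diffD_def)
qed

lemma diffD2_compr_pi2:
  assumes fu: "lshom S (f, u) (X, A) (Y, B)"
  shows "snd (diffD2 S X (UO S A) (cComp S (compr S (X, A) (f, u)) (cPi2 S Y (UO S B))))
       = snd (WMor S (X, A) (f, u))"
proof -
  let ?g = "compr S (X, A) (f, u)" and ?YB = "cProd S Y (UO S B)"
  have g: "cD ?g = cProd S X (UO S A)" "cC ?g = ?YB"
    using compr_type[OF fu] by simp_all
  have "(cComp S ?g (cPi2 S Y (UO S B)), snd (diffD2 S X (UO S A) (cComp S ?g (cPi2 S Y (UO S B)))))
      = lsComp S A (lsComp S A (iT2 S X (UO S A)) (tFun S ?g)) (tFun S (cPi2 S Y (UO S B)))"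
    using iT2_tFun[of "cComp S ?g (cPi2 S Y (UO S B))" X "UO S A"] tFun_comp[of ?g "cPi2 S Y (UO S B)"]
      lsComp_assoc[OF iT2_UO_lshom tFun_lshom[of ?g] tFun_lshom[of "cPi2 S Y (UO S B)"]] g
    by simp
  also have "\<dots> = lsComp S A (WMor S (X, A) (f, u)) (lsComp S B (iT2 S Y (UO S B)) (tFun S (cPi2 S Y (UO S B))))"
    unfolding WMor_iT2[OF fu, symmetric]
    using lsComp_assoc[OF WMor_lshom[OF fu] iT2_UO_lshom tFun_lshom[of "cPi2 S Y (UO S B)"]] by simp
  also have "\<dots> = (cComp S ?g (cPi2 S Y (UO S B)), snd (WMor S (X, A) (f, u)))"
  proof -
    obtain w where W: "WMor S (X, A) (f, u) = (?g, w)"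
      by (simp add: WMor_def)
    then have w: "lshom S (?g, w) (cProd S X (UO S A), A) (?YB, B)"
      using WMor_lshom[OF fu] by simp
    show ?thesis
      using lsComp_weak[OF w, of "lId S B"] iT2_tFun_pi(2)[where X=Y and Y="UO S B"] w W by (simp add: lshom_iff)
  qed
  finally show ?thesis
    by simp
qed


lemma scrD_bangS_WMor:
  assumes fu: "lshom S (f, u) (X, A) (Y, B)"
  shows "lsComp S A (scrD S X A) (bangS S (WObj S (X, A)) (WMor S (X, A) (f, u)))
       = (compr S (X, A) (f, u), lComp S (lComp S (lTenM S (contr S (cProd S X (UO S A))) (lId S A))
            (lTenM S (FM S (cPi1 S X (UO S A))) (snd (scrD S X A)))) (snd (bangS S (X, A) (f, u))))"
proof -
  let ?Z = "cProd S X (UO S A)" and ?g = "compr S (X, A) (f, u)" and ?p = "cPi1 S X (UO S A)"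
  have ty: "cD f = X" "cC f = Y" "lD u = lTen S (FO S X) A" "lC u = B"
    using fu by (simp_all add: lshom_iff)
  have "scrD S X A = (cId S ?Z, snd (scrD S X A))"
    unfolding scrD_def by (rule diffD2_vertical) simp
  then obtain d where scrD: "scrD S X A = (cId S ?Z, d)"
    by (rule that)
  have "lD (snd (scrD S X A)) = lTen S (FO S ?Z) A" "lC (snd (scrD S X A)) = FO S (UO S A)"
    unfolding scrD_def using diffD2_type[of _ X "UO S A"] by simp_all
  then have d: "lD d = lTen S (FO S ?Z) A" "lC d = FO S (UO S A)"
    unfolding scrD by simp_all
  have "snd (bangS S (WObj S (X, A)) (WMor S (X, A) (f, u)))
      = lComp S (lTenM S (FM S ?p) (lId S (FO S (UO S A)))) (snd (bangS S (X, A) (f, u)))"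
    using bangS_reindex[of ?p ?Z X u A ?g f] ty by (simp add: WObj_def WMor_def)
  moreover have "fst (bangS S (WObj S (X, A)) (WMor S (X, A) (f, u))) = ?g"
    by (simp add: bangS_def WMor_def)
  ultimately show ?thesis
    unfolding scrD using compr_type[OF fu] d ty
    by (simp add: lsComp_def lComp_assoc FM_comp[symmetric] bangS_def)
qed

lemma WMor_scrD:
  assumes fu: "lshom S (f, u) (X, A) (Y, B)"
  shows "lsComp S A (WMor S (X, A) (f, u)) (scrD S Y B)
       = (compr S (X, A) (f, u), lComp S (lComp S (lTenM S (contr S (cProd S X (UO S A))) (lId S A))
            (lTenM S (FM S (cPi1 S X (UO S A))) (snd (scrD S X A)))) (snd (bangS S (X, A) (f, u))))"
proof -
  let ?Z = "cProd S X (UO S A)" and ?g = "compr S (X, A) (f, u)"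
  obtain b where bf: "bangS S (X, A) (f, u) = (f, b)"
    by (simp add: bangS_def)
  have fb: "lshom S (f, b) (X, FO S (UO S A)) (Y, FO S (UO S B))"
    using bangS_lshom[OF fu] unfolding bf .
  let ?hA = "cComp S (cPi2 S X (UO S A)) (adjEta S (UO S A))"
    and ?hB = "cComp S (cPi2 S Y (UO S B)) (adjEta S (UO S B))"
  let ?P = "cPair S (cPi1 S X (UO S A)) ?hA" and ?d = "snd (scrD S X A)"
  let ?k = "cComp S (compr S (X, FO S (UO S A)) (f, b)) (cPi2 S Y (UO S (FO S (UO S B))))"
  have ty: "cD f = X" "cC f = Y" "lD u = lTen S (FO S X) A" "lC u = B"
    using fu by (simp_all add: lshom_iff)
  have k: "cD ?k = cProd S X (UO S (FO S (UO S A)))"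
    using compr_type[OF fb] by simp
  have d: "lD ?d = lTen S (FO S ?Z) A" "lC ?d = FO S (UO S A)"
    unfolding scrD_def using diffD2_type[of ?hA X "UO S A"] by simp_all
  have "lsComp S A (WMor S (X, A) (f, u)) (scrD S Y B) = (?g, snd (diffD2 S X (UO S A) (cComp S ?g ?hB)))"
    unfolding scrD_def using WMor_diffD2[OF fu, of ?hB] by simp
  also have "\<dots> = (?g, snd (lsComp S A (?P, ?d) (diffD2 S X (UO S (FO S (UO S A))) ?k)))"
    using diffD2_chain[of ?hA X "UO S A" ?k] k compr_adjEta[OF fu, unfolded bf] by (simp add: scrD_def)
  also have "\<dots> = (?g, lComp S (lComp S (lTenM S (contr S ?Z) (lId S A)) (lTenM S (FM S ?P) ?d))
               (snd (WMor S (X, FO S (UO S A)) (f, b))))"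
    using diffD2_compr_pi2[OF fb] diffD2_vertical[OF k] by (simp add: lsComp_def)
  also have "\<dots> = (?g, lComp S (lComp S (lTenM S (contr S ?Z) (lId S A)) (lTenM S (FM S (cPi1 S X (UO S A))) ?d)) b)"
    using d ty fb by (simp add: WMor_def lshom_iff lComp_assoc FM_comp[symmetric])
  finally show ?thesis
    unfolding bf by simp
qed

end

theorem proposition4p25:
  fixes S :: "('co, 'ca, 'lo, 'la) lnl_data"
    and X Y :: 'co and A B :: 'lo and f :: 'ca and u :: 'la
  assumes "GDSC S"
    and "lshom S (f, u) (X, A) (Y, B)"
  shows "lsComp S A (scrD S X A) (bangS S (WObj S (X, A)) (WMor S (X, A) (f, u)))
       = lsComp S A (WMor S (X, A) (f, u)) (scrD S Y B)"
proof -
  interpret gdsc S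
    by (rule gdsc.intro) (fact assms(1))
  show ?thesis
    unfolding scrD_bangS_WMor[OF assms(2)] WMor_scrD[OF assms(2)] ..
qed

end
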